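(* Let $p\geq 5$ be a prime and let $t$ be the unique integer with $1\leq t\leq p-1$ such that $24t+1\equiv 0\pmod p$. Then for all $n\geq 0$, $d_{p-2}(pn+t)\equiv 0\pmod p$.
   Context: For each integer $k\geq 1$, the numbers $d_k(n)$ are defined by $\sum_{n\geq 0} d_k(n)q^n = \frac{f_2^k}{f_1^{3k+1}}$, where $f_r = \prod_{i\geq 1}(1-q^{ri})$. *)

theory Defs
  imports "HOL-Computational_Algebra.Formal_Power_Series"
begin

(* Truncation of f_r = prod_{i>=1} (1 - q^(r i)) to factors i = 1..N.
   Factors with r*i > N do not affect coefficients of index <= N. *)
definition f_trunc :: "nat \<Rightarrow> nat \<Rightarrow> rat fps" where
  "f_trunc N r = (\<Prod>i\<in>{1..N}. 1 - fps_X ^ (r * i))"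

definition d :: "nat \<Rightarrow> nat \<Rightarrow> rat" where
  "d k n = fps_nth (f_trunc n 2 ^ k * inverse (f_trunc n 1 ^ (3 * k + 1))) n"

end

(*
  The product of the Jacobi triple products with parameters -1/z (in q) and -z^2 (in q^2)
  is differentiated with respect to z at z = 1. On the product side the first factor
  vanishes at z = 1, which leaves -f1^3 f2 (q;q^2)^2 = -f1^5 / f2. On the series side,
  regrouping the double sum by the residue of 2m - n modulo 3 and Euler's pentagonal
  theorem give -f2 S with S = sum_k (6k+1) q^(k(3k+1)/2). Hence f1^5 = f2^2 S; all of this
  is proved for truncated products, which determine the coefficients up to any order.
  Then f2^(p-2) / f1^(3p-5) = (f2^p / f1^(3p)) S, and modulo p the first factor is
  congruent to f(2p) / f(p)^3, a series in q^p. An exponent k(3k+1)/2 is congruent to t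
  modulo p exactly when p divides 24 k(3k+1)/2 + 1 = (6k+1)^2, so every term of S that
  reaches q^(pn+t) has its weight 6k+1 divisible by p.
*)

theory Submission
  imports Defs "HOL-Computational_Algebra.Primes"
begin

unbundle fps_syntax

section \<open>Agreement of power series up to a given order\<close>

definition fps_eq_upto :: "nat \<Rightarrow> 'a::comm_ring_1 fps \<Rightarrow> 'a fps \<Rightarrow> bool" where
  "fps_eq_upto N f g \<longleftrightarrow> (\<forall>i\<le>N. f $ i = g $ i)"

lemma fps_eq_upto_refl [simp]: "fps_eq_upto N f f"
  by (simp add: fps_eq_upto_def)

lemma fps_eq_upto_sym: "fps_eq_upto N f g \<Longrightarrow> fps_eq_upto N g f"
  by (simp add: fps_eq_upto_def)

lemma fps_eq_upto_trans [trans]: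
  "fps_eq_upto N f g \<Longrightarrow> fps_eq_upto N g h \<Longrightarrow> fps_eq_upto N f h"
  by (simp add: fps_eq_upto_def)

lemma fps_eq_upto_add:
  "fps_eq_upto N f g \<Longrightarrow> fps_eq_upto N f' g' \<Longrightarrow> fps_eq_upto N (f + f') (g + g')"
  by (simp add: fps_eq_upto_def)

lemma fps_eq_upto_mult:
  "fps_eq_upto N f g \<Longrightarrow> fps_eq_upto N f' g' \<Longrightarrow> fps_eq_upto N (f * f') (g * g')"
  unfolding fps_eq_upto_def fps_mult_nth by (auto intro!: sum.cong)

lemma fps_eq_upto_sum:
  "(\<And>i. i \<in> S \<Longrightarrow> fps_eq_upto N (f i) (g i)) \<Longrightarrow> fps_eq_upto N (sum f S) (sum g S)"
  by (induction S rule: infinite_finite_induct) (auto intro: fps_eq_upto_add)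

lemma fps_eq_upto_power: "fps_eq_upto N f g \<Longrightarrow> fps_eq_upto N (f ^ k) (g ^ k)"
  by (induction k) (auto intro: fps_eq_upto_mult)

lemma fps_eq_upto_X_power_mult: "N < a \<Longrightarrow> fps_eq_upto N (fps_X ^ a * f) 0"
  by (simp add: fps_eq_upto_def fps_X_power_mult_nth)

lemma fps_eq_upto_mult_cancel_left:
  assumes f0: "f $ 0 = 1" and fgh: "fps_eq_upto N (f * g) (f * h)"
  shows "fps_eq_upto N g h"
proof -
  have "(g - h) $ i = 0" if "i \<le> N" for i
    using that
  proof (induction i rule: less_induct)
    case (less i)
    have "(f * (g - h)) $ i = f $ 0 * (g - h) $ i + (\<Sum>j=1..i. f $ j * (g - h) $ (i - j))"
      by (simp add: fps_mult_nth sum.atLeast_Suc_atMost)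
    also have "(\<Sum>j=1..i. f $ j * (g - h) $ (i - j)) = 0"
      using less by (intro sum.neutral) auto
    finally show ?case
      using fgh f0 less.prems by (simp add: fps_eq_upto_def algebra_simps)
  qed
  then show ?thesis
    by (simp add: fps_eq_upto_def)
qed

section \<open>Gaussian binomial coefficients\<close>

fun qbinomial :: "'a::comm_ring_1 \<Rightarrow> nat \<Rightarrow> nat \<Rightarrow> 'a" where
  "qbinomial Q 0 k = (if k = 0 then 1 else 0)"
| "qbinomial Q (Suc m) k =
     (case k of 0 \<Rightarrow> 0 | Suc k' \<Rightarrow> qbinomial Q m k') + Q ^ k * qbinomial Q m k"

lemma qbinomial_0_right [simp]: "qbinomial Q m 0 = 1"
  by (induction m) auto

lemma qbinomial_eq_0: "m < k \<Longrightarrow> qbinomial Q m k = 0"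
  by (induction m arbitrary: k) (auto split: nat.split)

definition qpoch :: "'a::comm_ring_1 \<Rightarrow> nat \<Rightarrow> 'a" where
  "qpoch Q k = (\<Prod>j\<in>{1..k}. 1 - Q ^ j)"

lemma qpoch_0 [simp]: "qpoch Q 0 = 1"
  by (simp add: qpoch_def)

lemma qpoch_Suc: "qpoch Q (Suc k) = qpoch Q k * (1 - Q ^ Suc k)"
  by (simp add: qpoch_def prod.nat_ivl_Suc' mult.commute)

lemma triangular_Suc: "Suc i * i div 2 = i * (i - 1) div 2 + i"
proof -
  have "Suc i * i = i * (i - 1) + 2 * i"
    by (cases i) (simp_all add: algebra_simps)
  then show ?thesis
    by simp
qed

lemma q_binomial_term_shift:
  "u * Q ^ (Suc i * (Suc i - 1) div 2) * x ^ Suc i * y = x * (u * Q ^ (i * (i - 1) div 2) * (x * Q) ^ i * y)"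
  for u Q x y :: "'a::comm_semiring_1"
proof -
  have "Suc i * (Suc i - 1) div 2 = i * (i - 1) div 2 + i"
    using triangular_Suc by simp
  then show ?thesis
    by (simp only: power_add power_mult_distrib power_Suc ac_simps)
qed

lemma q_binomial_theorem:
  "(\<Prod>j<M. y + x * Q ^ j) =
     (\<Sum>i\<le>M. qbinomial Q M i * Q ^ (i * (i - 1) div 2) * x ^ i * y ^ (M - i))"
proof (induction M arbitrary: x)
  case 0
  then show ?case by simp
next
  case (Suc M)
  let ?S = "\<Sum>i\<le>M. qbinomial Q M i * Q ^ (i * (i - 1) div 2) * (x * Q) ^ i * y ^ (M - i)"
  have "(\<Prod>j<Suc M. y + x * Q ^ j) = (y + x) * (\<Prod>j<M. y + (x * Q) * Q ^ j)"
    by (subst prod.lessThan_Suc_shift) (simp add: mult.assoc)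
  also have "\<dots> = (y + x) * ?S"
    by (simp add: Suc.IH)
  finally have lhs: "(\<Prod>j<Suc M. y + x * Q ^ j) = y * ?S + x * ?S"
    by (simp add: algebra_simps)
  have "(\<Sum>i\<le>Suc M. qbinomial Q (Suc M) i * Q ^ (i * (i - 1) div 2) * x ^ i * y ^ (Suc M - i))
     = (\<Sum>i\<le>Suc M. (case i of 0 \<Rightarrow> 0 | Suc k \<Rightarrow> qbinomial Q M k) * Q ^ (i * (i - 1) div 2) * x ^ i * y ^ (Suc M - i))
     + (\<Sum>i\<le>Suc M. Q ^ i * qbinomial Q M i * Q ^ (i * (i - 1) div 2) * x ^ i * y ^ (Suc M - i))"
    by (simp add: sum.distrib algebra_simps)
  also have "(\<Sum>i\<le>Suc M. Q ^ i * qbinomial Q M i * Q ^ (i * (i - 1) div 2) * x ^ i * y ^ (Suc M - i))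
      = (\<Sum>i\<le>M. Q ^ i * qbinomial Q M i * Q ^ (i * (i - 1) div 2) * x ^ i * y ^ (Suc M - i))"
    by (simp add: qbinomial_eq_0)
  also have "\<dots> = y * ?S"
    by (simp add: sum_distrib_left power_mult_distrib Suc_diff_le algebra_simps)
  also have "(\<Sum>i\<le>Suc M. (case i of 0 \<Rightarrow> 0 | Suc k \<Rightarrow> qbinomial Q M k) * Q ^ (i * (i - 1) div 2) * x ^ i * y ^ (Suc M - i))
      = (\<Sum>i\<le>M. qbinomial Q M i * Q ^ (Suc i * (Suc i - 1) div 2) * x ^ Suc i * y ^ (M - i))"
    by (subst sum.atMost_Suc_shift) simp
  also have "\<dots> = x * ?S"
    by (simp only: sum_distrib_left q_binomial_term_shift)
  finally show ?case
    using lhs by (simp add: algebra_simps)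
qed

lemma qpoch_diff_Suc: "j < m \<Longrightarrow> qpoch Q (m - j) = qpoch Q (m - Suc j) * (1 - Q ^ (m - j))"
  using qpoch_Suc[of Q "m - Suc j"] by (simp add: Suc_diff_Suc)

lemma qpoch_qbinomial:
  "i \<le> m \<Longrightarrow> qpoch Q i * qpoch Q (m - i) * qbinomial Q m i = qpoch Q m"
proof (induction m arbitrary: i)
  case 0
  then show ?case by simp
next
  case (Suc m)
  show ?case
  proof (cases i)
    case 0
    then show ?thesis by simp
  next
    case (Suc j)
    with Suc.prems have j: "j \<le> m" by simp
    have left: "qpoch Q (Suc j) * qpoch Q (m - j) * qbinomial Q m j = (1 - Q ^ Suc j) * qpoch Q m"
      using Suc.IH[OF j] by (simp add: qpoch_Suc algebra_simps)
    have right: "qpoch Q (Suc j) * qpoch Q (m - j) * qbinomial Q m (Suc j) = (1 - Q ^ (m - j)) * qpoch Q m"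
    proof (cases "j = m")
      case True
      then show ?thesis by (simp add: qbinomial_eq_0)
    next
      case False
      then have "Suc j \<le> m" "j < m"
        using j by simp_all
      then have "qpoch Q (Suc j) * qpoch Q (m - j) * qbinomial Q m (Suc j)
          = qpoch Q (Suc j) * qpoch Q (m - Suc j) * qbinomial Q m (Suc j) * (1 - Q ^ (m - j))"
        by (simp only: qpoch_diff_Suc ac_simps)
      then show ?thesis
        using Suc.IH[OF \<open>Suc j \<le> m\<close>] by simp
    qed
    have "qbinomial Q (Suc m) i = qbinomial Q m j + Q ^ Suc j * qbinomial Q m (Suc j)"
      using Suc by simp
    then have "qpoch Q i * qpoch Q (Suc m - i) * qbinomial Q (Suc m) i
       = qpoch Q (Suc j) * qpoch Q (m - j) * qbinomial Q m j
         + Q ^ Suc j * (qpoch Q (Suc j) * qpoch Q (m - j) * qbinomial Q m (Suc j))"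
      using Suc by (simp add: algebra_simps)
    also have "\<dots> = (1 - Q ^ Suc j) * qpoch Q m + Q ^ Suc j * ((1 - Q ^ (m - j)) * qpoch Q m)"
      by (simp only: left right)
    also have "\<dots> = qpoch Q m * (1 - Q ^ (Suc j + (m - j)))"
      by (simp add: algebra_simps power_add)
    also have "Suc j + (m - j) = Suc m"
      using j by simp
    finally show ?thesis
      by (simp add: qpoch_Suc)
  qed
qed

lemma qpoch_X_power_nth_0: "b \<ge> 1 \<Longrightarrow> qpoch ((fps_X :: 'a::comm_ring_1 fps) ^ b) k $ 0 = 1"
  by (induction k) (simp_all add: qpoch_Suc flip: power_mult)

lemma qpoch_eq_upto:
  assumes "b \<ge> 1" "N \<le> k"
  shows "fps_eq_upto N (qpoch ((fps_X :: 'a::comm_ring_1 fps) ^ b) k) (qpoch (fps_X ^ b) N)"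
  using assms(2)
proof (induction k rule: dec_induct)
  case base
  then show ?case by simp
next
  case (step k)
  have "N < b * Suc k"
    using step.hyps assms(1) by (metis le_imp_less_Suc mult_1 mult_le_mono1 order_less_le_trans)
  then have "fps_eq_upto N (1 - (fps_X :: 'a fps) ^ (b * Suc k)) 1"
    by (simp add: fps_eq_upto_def)
  then have "fps_eq_upto N (qpoch ((fps_X :: 'a fps) ^ b) k * (1 - fps_X ^ (b * Suc k))) (qpoch (fps_X ^ b) N * 1)"
    by (rule fps_eq_upto_mult[OF step.IH])
  then show ?case
    by (simp only: qpoch_Suc mult_1_right flip: power_mult)
qed

text \<open>Follows from \<open>(q;q)\<^sub>i (q;q)\<^sub>m\<^sub>-\<^sub>i [m choose i]\<^sub>q = (q;q)\<^sub>m\<close>, since all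
  \<open>(q;q)\<^sub>k\<close> with \<open>k \<ge> N\<close> agree to order \<open>N\<close>.\<close>

lemma qpoch_qbinomial_eq_upto:
  assumes b: "b \<ge> 1" and i: "i \<le> m" "N \<le> i" "N \<le> m - i" "N \<le> k"
  shows "fps_eq_upto N (qpoch ((fps_X :: 'a::comm_ring_1 fps) ^ b) k * qbinomial (fps_X ^ b) m i) 1"
proof -
  let ?q = "qpoch ((fps_X :: 'a fps) ^ b)" and ?g = "qbinomial (fps_X ^ b) m i"
  have h: "?q i * ?q (m - i) * ?g = ?q m"
    by (rule qpoch_qbinomial[OF i(1)])
  have "fps_eq_upto N (?q i * ?q (m - i) * ?g) (?q N * ?q N * ?g)"
    using qpoch_eq_upto[OF b i(2)] qpoch_eq_upto[OF b i(3)] by (intro fps_eq_upto_mult) simp_all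
  moreover have "fps_eq_upto N (?q m) (?q N)"
    using i by (intro qpoch_eq_upto[OF b]) simp
  ultimately have "fps_eq_upto N (?q N * (?q N * ?g)) (?q N * 1)"
    using h by (simp add: fps_eq_upto_def mult.assoc)
  then have "fps_eq_upto N (?q N * ?g) 1"
    by (rule fps_eq_upto_mult_cancel_left[OF qpoch_X_power_nth_0[OF b]])
  moreover have "fps_eq_upto N (?q k) (?q N)"
    using qpoch_eq_upto[OF b i(4)] .
  ultimately show ?thesis
    using fps_eq_upto_mult[of N "?q k" "?q N" ?g ?g] by (metis fps_eq_upto_refl fps_eq_upto_trans)
qed

section \<open>Power series with prescribed exponents\<close>

text \<open>\<open>exp_series w e = \<Sum>\<^sub>x w x * q ^ e x\<close>. It is meant for exponent functions
  \<open>e\<close> with finite fibres; an infinite fibre contributes the junk value \<open>0\<close>.\<close>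

definition exp_series :: "('i \<Rightarrow> 'a::comm_ring_1) \<Rightarrow> ('i \<Rightarrow> int) \<Rightarrow> 'a fps" where
  "exp_series w e = Abs_fps (\<lambda>M. \<Sum>x | e x = int M. w x)"

lemma exp_series_nth: "exp_series w e $ M = (\<Sum>x | e x = int M. w x)"
  by (simp add: exp_series_def)

lemma exp_series_mult:
  fixes u :: "'i \<Rightarrow> 'a::comm_ring_1" and v :: "'j \<Rightarrow> 'a"
  assumes e_nonneg: "\<And>x. e x \<ge> 0" and e'_nonneg: "\<And>y. e' y \<ge> 0"
    and e_fin: "\<And>M. finite {x. e x = int M}" and e'_fin: "\<And>M. finite {y. e' y = int M}"
  shows "exp_series u e * exp_series v e' = exp_series (\<lambda>(x, y). u x * v y) (\<lambda>(x, y). e x + e' y)"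
proof (rule fps_ext)
  fix M
  let ?A = "\<lambda>i. {x. e x = int i} \<times> {y. e' y = int (M - i)}"
  have "(exp_series u e * exp_series v e') $ M
      = (\<Sum>i=0..M. (\<Sum>x | e x = int i. u x) * (\<Sum>y | e' y = int (M - i). v y))"
    by (simp add: fps_mult_nth exp_series_nth)
  also have "\<dots> = (\<Sum>i=0..M. \<Sum>p\<in>?A i. (\<lambda>(x, y). u x * v y) p)"
    by (simp add: sum_product sum.cartesian_product)
  also have "\<dots> = (\<Sum>p\<in>(\<Union>i\<in>{0..M}. ?A i). (\<lambda>(x, y). u x * v y) p)"
  proof (rule sum.UNION_disjoint[symmetric])
    show "\<forall>i\<in>{0..M}. finite (?A i)"
      by (intro ballI finite_cartesian_product e_fin e'_fin)
  qed auto
  also have "(\<Union>i\<in>{0..M}. ?A i) = {p. (\<lambda>(x, y). e x + e' y) p = int M}"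
  proof (intro equalityI subsetI)
    fix p assume "p \<in> {p. (\<lambda>(x, y). e x + e' y) p = int M}"
    then obtain x y where p: "p = (x, y)" "e x + e' y = int M"
      by (cases p) auto
    have "e x = int (nat (e x))" "e' y = int (M - nat (e x))" "nat (e x) \<in> {0..M}"
      using p(2) e_nonneg[of x] e'_nonneg[of y] by auto
    then show "p \<in> (\<Union>i\<in>{0..M}. ?A i)"
      using p by blast
  qed auto
  finally show "(exp_series u e * exp_series v e') $ M
      = exp_series (\<lambda>(x, y). u x * v y) (\<lambda>(x, y). e x + e' y) $ M"
    by (simp add: exp_series_nth)
qed

section \<open>A finite Jacobi triple product\<close>

text \<open>\<open>zpow c c' k\<close> is \<open>c ^ k\<close> for an integer \<open>k\<close>, where \<open>c'\<close> stands for \<open>c\<^sup>-\<^sup>1\<close>.\<close>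

definition zpow :: "'a::comm_ring_1 \<Rightarrow> 'a \<Rightarrow> int \<Rightarrow> 'a" where
  "zpow c c' k = (if k \<ge> 0 then c ^ nat k else c' ^ nat (- k))"

lemma zpow_shift:
  assumes "c * c' = 1"
  shows "c ^ L * zpow c c' (int i - int L) = c ^ i"
proof (cases "L \<le> i")
  case True
  then have "nat (int i - int L) = i - L" by simp
  with True show ?thesis
    by (simp add: zpow_def flip: power_add)
next
  case False
  then have "c ^ L = c ^ i * c ^ (L - i)"
    by (simp flip: power_add)
  moreover have "nat (- (int i - int L)) = L - i"
    using False by simp
  ultimately have "c ^ L * zpow c c' (int i - int L) = c ^ i * (c * c') ^ (L - i)"
    using False by (simp add: zpow_def power_mult_distrib)
  then show ?thesis
    using assms by simp
qed

definition jtp_exp :: "nat \<Rightarrow> nat \<Rightarrow> int \<Rightarrow> int" where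
  "jtp_exp b a k = int b * (k * (k + 1) div 2) - int a * k"

lemma jtp_exp_double: "2 * jtp_exp b a k = int b * (k * (k + 1)) - 2 * int a * k"
  by (simp add: jtp_exp_def)

lemma jtp_exp_bounds:
  assumes "a < b"
  shows "jtp_exp b a k \<ge> 0" "jtp_exp b a k \<ge> \<bar>k\<bar> - 1"
proof -
  have b: "int a + 1 \<le> int b"
    using assms by simp
  have "2 * jtp_exp b a k \<ge> 2 * \<bar>k\<bar> - 2 \<and> 2 * jtp_exp b a k \<ge> 0"
  proof (cases "k \<ge> 0")
    case True
    have "2 * jtp_exp b a k = int b * (k * (k - 1)) + 2 * (int b - int a - 1) * k + 2 * k"
      by (simp add: jtp_exp_double algebra_simps)
    moreover have "int b * (k * (k - 1)) \<ge> 0" "(int b - int a - 1) * k \<ge> 0"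
      using True b by (auto simp: zero_le_mult_iff)
    ultimately show ?thesis
      using True by (simp add: abs_of_nonneg algebra_simps)
  next
    case False
    have "(int b - 1) * (k * (k + 1)) \<ge> 0" "(k + 1) * (k + 2) \<ge> 0" "int a * k \<le> 0"
      using False b by (auto simp: zero_le_mult_iff mult_le_0_iff)
    then show ?thesis
      using False by (simp add: jtp_exp_double algebra_simps)
  qed
  then show "jtp_exp b a k \<ge> 0" "jtp_exp b a k \<ge> \<bar>k\<bar> - 1"
    by auto
qed

lemma jtp_exp_le_finite:
  assumes "a < b"
  shows "finite {k. jtp_exp b a k \<le> int M}"
proof (rule finite_subset)
  show "{k. jtp_exp b a k \<le> int M} \<subseteq> {- (int M + 1)..int M + 1}"
  proof
    fix k assume "k \<in> {k. jtp_exp b a k \<le> int M}"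
    then have "\<bar>k\<bar> \<le> int M + 1"
      using jtp_exp_bounds(2)[OF assms, of k] by simp
    then show "k \<in> {- (int M + 1)..int M + 1}"
      by (auto simp: abs_le_iff)
  qed
qed simp

lemma jtp_exp_fibre_finite: "a < b \<Longrightarrow> finite {k. jtp_exp b a k = int M}"
  by (rule finite_subset[OF _ jtp_exp_le_finite]) auto

lemma two_mult_triangular: "2 * int (n * (n - 1) div 2) = int n * (int n - 1)"
proof -
  have "2 * (n * (n - 1) div 2) = n * (n - 1)"
    by (cases n) simp_all
  then have "2 * int (n * (n - 1) div 2) = int (n * (n - 1))"
    by (metis of_nat_mult of_nat_numeral)
  then show ?thesis
    by (cases n) (simp_all add: algebra_simps)
qed

lemma qbinomial_exp_eq_jtp_exp:
  assumes "L \<ge> 1" "i \<le> 2 * L"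
  shows "int (b * (i * (i - 1) div 2) + ((L - 1) * b + a) * (2 * L - i))
       = int (b * (L * (L - 1) div 2) + L * ((L - 1) * b + a)) + jtp_exp b a (int i - int L)"
proof -
  define Ti TL C where "Ti = i * (i - 1) div 2" and "TL = L * (L - 1) div 2" and "C = (L - 1) * b + a"
  have Ti: "2 * int Ti = int i * (int i - 1)" and TL: "2 * int TL = int L * (int L - 1)"
    unfolding Ti_def TL_def by (rule two_mult_triangular)+
  have C: "int C = (int L - 1) * int b + int a" and D: "int (2 * L - i) = 2 * int L - int i"
    using assms by (simp_all add: C_def of_nat_diff)
  have "2 * int (b * Ti + C * (2 * L - i)) = int b * (2 * int Ti) + 2 * (int C * int (2 * L - i))"
    by (simp only: of_nat_add of_nat_mult) (simp add: algebra_simps)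
  also have "\<dots> = int b * (2 * int TL) + 2 * (int L * int C) + 2 * jtp_exp b a (int i - int L)"
    unfolding Ti TL C D jtp_exp_double by (simp add: algebra_simps)
  also have "\<dots> = 2 * (int (b * TL + L * C) + jtp_exp b a (int i - int L))"
    by (simp add: algebra_simps)
  finally show ?thesis
    unfolding Ti_def TL_def C_def by simp
qed

definition jtp_prod :: "nat \<Rightarrow> nat \<Rightarrow> 'a::comm_ring_1 \<Rightarrow> 'a \<Rightarrow> nat \<Rightarrow> 'a fps" where
  "jtp_prod b a c c' L =
     (\<Prod>k<L. (1 + fps_const c * fps_X ^ (b * (k + 1) - a)) * (1 + fps_const c' * fps_X ^ (b * k + a)))"

lemma prod_lessThan_add: "(\<Prod>j<m + n. f j) = (\<Prod>j<m. f j) * (\<Prod>j<n. f (m + j))"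
  for f :: "nat \<Rightarrow> 'a::comm_monoid_mult"
  by (induction n) (simp_all add: ac_simps)

lemma prod_X_power_triangular:
  "(\<Prod>j<L. (fps_X :: 'a::comm_ring_1 fps) ^ (b * j)) = fps_X ^ (b * (L * (L - 1) div 2))"
proof (induction L)
  case 0
  then show ?case by simp
next
  case (Suc L)
  have "Suc L * (Suc L - 1) div 2 = L * (L - 1) div 2 + L"
    using triangular_Suc[of L] by simp
  then show ?case
    using Suc by (simp add: algebra_simps flip: power_add)
qed

lemma fps_X_power_mult_cancel: "fps_X ^ E * f = fps_X ^ E * g \<Longrightarrow> f = g"
proof (rule fps_ext)
  fix n
  assume "fps_X ^ E * f = fps_X ^ E * g"
  then have "(fps_X ^ E * f) $ (n + E) = (fps_X ^ E * g) $ (n + E)"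
    by simp
  then show "f $ n = g $ n"
    by (simp add: fps_X_power_mult_nth)
qed

text \<open>With \<open>y = q\<^bsup>(L-1)b+a\<^esup>\<close> the \<open>2L\<close> factors \<open>y + c q\<^bsup>bj\<^esup>\<close> of the \<open>q\<^sup>b\<close>-binomial
  theorem split into the two halves of the triple product.\<close>

lemma qbinomial_factor_low:
  fixes c c' :: "'a::comm_ring_1"
  assumes "c * c' = 1" "j < L"
  shows "fps_X ^ ((L - 1) * b + a) + fps_const c * (fps_X ^ b) ^ j
       = fps_const c * fps_X ^ (b * j) * (1 + fps_const c' * fps_X ^ (b * (L - 1 - j) + a))"
proof -
  have "b * j + b * (L - 1 - j) = b * (L - 1)"
    using assms(2) by (simp flip: add_mult_distrib2)
  then have y: "fps_X ^ (b * j) * fps_X ^ (b * (L - 1 - j) + a) = (fps_X :: 'a fps) ^ ((L - 1) * b + a)"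
    by (simp add: mult.commute add.assoc flip: power_add)
  have "fps_const c * fps_X ^ (b * j) * (1 + fps_const c' * fps_X ^ (b * (L - 1 - j) + a))
      = fps_const c * fps_X ^ (b * j) + fps_const (c * c') * (fps_X ^ (b * j) * fps_X ^ (b * (L - 1 - j) + a))"
    by (simp add: algebra_simps flip: fps_const_mult)
  also have "\<dots> = fps_const c * (fps_X ^ b) ^ j + fps_X ^ ((L - 1) * b + a)"
    using assms(1) y by (simp add: power_mult)
  finally show ?thesis
    by simp
qed

lemma qbinomial_factor_high:
  assumes "a < b" "L \<ge> 1"
  shows "fps_X ^ ((L - 1) * b + a) + fps_const c * (fps_X ^ b) ^ (L + j)
       = fps_X ^ ((L - 1) * b + a) * (1 + fps_const (c :: 'a::comm_ring_1) * fps_X ^ (b * (j + 1) - a))"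
proof -
  have "a \<le> b * (j + 1)"
    using assms(1) by simp
  moreover have "(L - 1) * b + b * (j + 1) = b * (L + j)"
    using assms(2) by (cases L) (simp_all add: algebra_simps)
  ultimately have e: "(L - 1) * b + a + (b * (j + 1) - a) = b * (L + j)"
    by simp
  have "fps_X ^ ((L - 1) * b + a) * (1 + fps_const c * fps_X ^ (b * (j + 1) - a))
      = fps_X ^ ((L - 1) * b + a) + fps_const c * (fps_X :: 'a fps) ^ ((L - 1) * b + a + (b * (j + 1) - a))"
    by (simp add: algebra_simps power_add)
  also have "\<dots> = fps_X ^ ((L - 1) * b + a) + fps_const c * (fps_X ^ b) ^ (L + j)"
    using e by (simp add: power_mult)
  finally show ?thesis
    by simp
qed

lemma qbinomial_product_eq_jtp_prod:
  fixes c c' :: "'a::comm_ring_1"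
  assumes cc: "c * c' = 1" and ab: "a < b" and L: "L \<ge> 1"
  shows "(\<Prod>j<2 * L. fps_X ^ ((L - 1) * b + a) + fps_const c * (fps_X ^ b) ^ j)
       = fps_const (c ^ L) * fps_X ^ (b * (L * (L - 1) div 2) + L * ((L - 1) * b + a)) * jtp_prod b a c c' L"
proof -
  let ?y = "fps_X ^ ((L - 1) * b + a) :: 'a fps"
  let ?x = "fps_const c :: 'a fps"
  let ?Q = "fps_X ^ b :: 'a fps"
  have "(\<Prod>j<2 * L. ?y + ?x * ?Q ^ j) = (\<Prod>j<L. ?y + ?x * ?Q ^ j) * (\<Prod>j<L. ?y + ?x * ?Q ^ (L + j))"
    using prod_lessThan_add[of "\<lambda>j. ?y + ?x * ?Q ^ j" L L] by (simp add: mult_2)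
  also have "(\<Prod>j<L. ?y + ?x * ?Q ^ j)
      = (\<Prod>j<L. fps_const c * fps_X ^ (b * j) * (1 + fps_const c' * fps_X ^ (b * (L - 1 - j) + a)))"
    by (rule prod.cong[OF refl]) (rule qbinomial_factor_low[OF cc], simp)
  also have "\<dots> = fps_const c ^ L * (\<Prod>j<L. fps_X ^ (b * j))
      * (\<Prod>j<L. 1 + fps_const c' * fps_X ^ (b * (L - 1 - j) + a))"
    by (simp add: prod.distrib)
  also have "(\<Prod>j<L. 1 + fps_const c' * fps_X ^ (b * (L - 1 - j) + a))
      = (\<Prod>j<L. 1 + fps_const c' * fps_X ^ (b * j + a))"
    using prod.nat_diff_reindex[of "\<lambda>j. 1 + fps_const c' * fps_X ^ (b * j + a)" L] by simp
  also have "(\<Prod>j<L. ?y + ?x * ?Q ^ (L + j)) = ?y ^ L * (\<Prod>j<L. 1 + fps_const c * fps_X ^ (b * (j + 1) - a))"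
    by (simp only: qbinomial_factor_high[OF ab L] prod.distrib prod_constant card_lessThan)
  also have "(\<Prod>j<L. fps_X ^ (b * j)) = (fps_X :: 'a fps) ^ (b * (L * (L - 1) div 2))"
    by (rule prod_X_power_triangular)
  also have "fps_const c ^ L * fps_X ^ (b * (L * (L - 1) div 2)) * (\<Prod>j<L. 1 + fps_const c' * fps_X ^ (b * j + a))
      * (?y ^ L * (\<Prod>j<L. 1 + fps_const c * fps_X ^ (b * (j + 1) - a)))
      = fps_const (c ^ L) * (fps_X ^ (b * (L * (L - 1) div 2)) * ?y ^ L)
      * ((\<Prod>j<L. 1 + fps_const c * fps_X ^ (b * (j + 1) - a)) * (\<Prod>j<L. 1 + fps_const c' * fps_X ^ (b * j + a)))"
    by (simp only: fps_const_power ac_simps)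
  also have "fps_X ^ (b * (L * (L - 1) div 2)) * ?y ^ L = fps_X ^ (b * (L * (L - 1) div 2) + L * ((L - 1) * b + a))"
    by (simp only: power_add mult.commute[of L] power_mult)
  also have "(\<Prod>j<L. 1 + fps_const c * fps_X ^ (b * (j + 1) - a)) * (\<Prod>j<L. 1 + fps_const c' * fps_X ^ (b * j + a))
      = jtp_prod b a c c' L"
    unfolding jtp_prod_def by (rule prod.distrib[symmetric])
  finally show ?thesis .
qed

lemma qbinomial_term_eq_jtp_term:
  fixes c c' :: "'a::comm_ring_1"
  assumes cc: "c * c' = 1" and ab: "a < b" and L: "L \<ge> 1" and i: "i \<le> 2 * L"
  defines "E \<equiv> b * (L * (L - 1) div 2) + L * ((L - 1) * b + a)"
  shows "qbinomial (fps_X ^ b) (2 * L) i * (fps_X ^ b) ^ (i * (i - 1) div 2) * fps_const c ^ i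
           * (fps_X ^ ((L - 1) * b + a)) ^ (2 * L - i)
       = fps_const (c ^ L) * fps_X ^ E * (qbinomial (fps_X ^ b) (2 * L) i
           * fps_const (zpow c c' (int i - int L)) * fps_X ^ nat (jtp_exp b a (int i - int L)))"
proof -
  have "int (b * (i * (i - 1) div 2) + ((L - 1) * b + a) * (2 * L - i)) = int E + jtp_exp b a (int i - int L)"
    unfolding E_def by (rule qbinomial_exp_eq_jtp_exp[OF L i])
  then have "b * (i * (i - 1) div 2) + ((L - 1) * b + a) * (2 * L - i) = E + nat (jtp_exp b a (int i - int L))"
    using jtp_exp_bounds(1)[OF ab, of "int i - int L"] by linarith
  then have X: "(fps_X ^ b) ^ (i * (i - 1) div 2) * (fps_X ^ ((L - 1) * b + a)) ^ (2 * L - i)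
      = (fps_X :: 'a fps) ^ E * fps_X ^ nat (jtp_exp b a (int i - int L))"
    by (simp flip: power_mult power_add)
  have C: "fps_const c ^ i = fps_const (c ^ L) * fps_const (zpow c c' (int i - int L))"
    using zpow_shift[OF cc, of L i] by (simp add: fps_const_power)
  have "qbinomial (fps_X ^ b) (2 * L) i * (fps_X ^ b) ^ (i * (i - 1) div 2) * fps_const c ^ i
           * (fps_X ^ ((L - 1) * b + a)) ^ (2 * L - i)
      = qbinomial (fps_X ^ b) (2 * L) i * fps_const c ^ i
           * ((fps_X ^ b) ^ (i * (i - 1) div 2) * (fps_X ^ ((L - 1) * b + a)) ^ (2 * L - i))"
    by (simp only: ac_simps)
  also have "\<dots> = qbinomial (fps_X ^ b) (2 * L) i * (fps_const (c ^ L) * fps_const (zpow c c' (int i - int L)))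
           * (fps_X ^ E * fps_X ^ nat (jtp_exp b a (int i - int L)))"
    by (simp only: C X)
  finally show ?thesis
    by (simp only: ac_simps)
qed

lemma jtp_prod_expand:
  fixes c c' :: "'a::comm_ring_1"
  assumes cc: "c * c' = 1" and ab: "a < b" and L: "L \<ge> 1"
  shows "jtp_prod b a c c' L = (\<Sum>i\<le>2 * L. qbinomial (fps_X ^ b) (2 * L) i
           * fps_const (zpow c c' (int i - int L)) * fps_X ^ nat (jtp_exp b a (int i - int L)))"
    (is "_ = ?S")
proof -
  define E where "E = b * (L * (L - 1) div 2) + L * ((L - 1) * b + a)"
  have "fps_const (c ^ L) * fps_X ^ E * jtp_prod b a c c' L
      = (\<Prod>j<2 * L. fps_X ^ ((L - 1) * b + a) + fps_const c * (fps_X ^ b) ^ j)"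
    unfolding E_def by (rule qbinomial_product_eq_jtp_prod[OF cc ab L, symmetric])
  also have "\<dots> = (\<Sum>i\<le>2 * L. qbinomial (fps_X ^ b) (2 * L) i * (fps_X ^ b) ^ (i * (i - 1) div 2)
      * fps_const c ^ i * (fps_X ^ ((L - 1) * b + a)) ^ (2 * L - i))"
    by (rule q_binomial_theorem)
  also have "\<dots> = (\<Sum>i\<le>2 * L. fps_const (c ^ L) * fps_X ^ E * (qbinomial (fps_X ^ b) (2 * L) i
      * fps_const (zpow c c' (int i - int L)) * fps_X ^ nat (jtp_exp b a (int i - int L))))"
    unfolding E_def by (rule sum.cong[OF refl]) (rule qbinomial_term_eq_jtp_term[OF cc ab L], simp)
  also have "\<dots> = fps_const (c ^ L) * fps_X ^ E * ?S"
    by (simp only: sum_distrib_left)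
  finally have "fps_const (c ^ L) * fps_X ^ E * jtp_prod b a c c' L = fps_const (c ^ L) * fps_X ^ E * ?S" .
  then have "fps_const (c' ^ L) * fps_const (c ^ L) * (fps_X ^ E * jtp_prod b a c c' L)
      = fps_const (c' ^ L) * fps_const (c ^ L) * (fps_X ^ E * ?S)"
    by (simp only: mult.assoc)
  moreover have "fps_const (c' ^ L) * fps_const (c ^ L) = (1 :: 'a fps)"
    using cc by (simp add: mult.commute flip: power_mult_distrib)
  ultimately have "fps_X ^ E * jtp_prod b a c c' L = fps_X ^ E * ?S"
    by (simp only: mult_1)
  then show ?thesis
    by (rule fps_X_power_mult_cancel)
qed

lemma fps_const_mult_X_power_nth: "(fps_const (a :: 'a::comm_ring_1) * fps_X ^ n) $ M = (if M = n then a else 0)"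
  by (simp add: mult.commute[of "fps_const a"] fps_X_power_mult_nth)

text \<open>Multiplying by \<open>(q\<^sup>b; q\<^sup>b)\<^sub>L\<close> turns every Gaussian binomial that matters below
  order \<open>N\<close> into \<open>1\<close>; the other terms only contribute above order \<open>N\<close>.\<close>

lemma qpoch_qbinomial_mult_term_eq_upto:
  fixes w :: "'a::comm_ring_1"
  assumes ab: "a < b" and L: "L \<ge> 2 * N + 2" and i: "i \<le> 2 * L"
  defines "T \<equiv> fps_const w * fps_X ^ nat (jtp_exp b a (int i - int L))"
  shows "fps_eq_upto N (qpoch (fps_X ^ b) L * qbinomial (fps_X ^ b) (2 * L) i * T) T"
proof (cases "nat (jtp_exp b a (int i - int L)) \<le> N")
  case True
  then have "\<bar>int i - int L\<bar> \<le> int N + 1"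
    using jtp_exp_bounds(2)[OF ab, of "int i - int L"] by simp
  then have "N \<le> i" "N \<le> 2 * L - i" "N \<le> L"
    using L by auto
  then have "fps_eq_upto N (qpoch (fps_X ^ b) L * qbinomial (fps_X ^ b) (2 * L) i) (1 :: 'a fps)"
    using ab i by (intro qpoch_qbinomial_eq_upto) simp_all
  then show ?thesis
    using fps_eq_upto_mult[of N _ 1 T T] by simp
next
  case False
  then have "fps_eq_upto N (fps_X ^ nat (jtp_exp b a (int i - int L))
        * (qpoch (fps_X ^ b) L * qbinomial (fps_X ^ b) (2 * L) i * fps_const w)) 0"
      "fps_eq_upto N (fps_X ^ nat (jtp_exp b a (int i - int L)) * fps_const w) 0"
    by (simp_all add: fps_eq_upto_X_power_mult)
  then show ?thesis
    unfolding T_def by (simp add: fps_eq_upto_def ac_simps)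
qed

lemma qpoch_mult_jtp_prod_eq_upto:
  fixes c c' :: "'a::comm_ring_1"
  assumes cc: "c * c' = 1" and ab: "a < b" and L: "L \<ge> 2 * N + 2"
  shows "fps_eq_upto N (qpoch (fps_X ^ b) L * jtp_prod b a c c' L)
           (\<Sum>i\<le>2 * L. fps_const (zpow c c' (int i - int L)) * fps_X ^ nat (jtp_exp b a (int i - int L)))"
proof -
  let ?T = "\<lambda>i. fps_const (zpow c c' (int i - int L)) * fps_X ^ nat (jtp_exp b a (int i - int L)) :: 'a fps"
  have L1: "L \<ge> 1"
    using L by simp
  have "qpoch (fps_X ^ b) L * jtp_prod b a c c' L
      = (\<Sum>i\<le>2 * L. qpoch (fps_X ^ b) L * qbinomial (fps_X ^ b) (2 * L) i * ?T i)"
    unfolding jtp_prod_expand[OF cc ab L1] sum_distrib_left by (simp only: mult.assoc mult.left_commute)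
  also have "fps_eq_upto N \<dots> (\<Sum>i\<le>2 * L. ?T i)"
    using ab L by (intro fps_eq_upto_sum qpoch_qbinomial_mult_term_eq_upto) simp_all
  finally show ?thesis .
qed

lemma jtp_terms_nth:
  assumes ab: "a < b" and L: "L \<ge> 2 * N + 2" and M: "M \<le> N"
  shows "(\<Sum>i\<le>2 * L. fps_const (zpow c c' (int i - int L)) * fps_X ^ nat (jtp_exp b a (int i - int L))) $ M
       = exp_series (zpow c c') (jtp_exp b a) $ M"
proof -
  let ?k = "\<lambda>i::nat. int i - int L"
  have "(\<Sum>i\<le>2 * L. fps_const (zpow c c' (?k i)) * fps_X ^ nat (jtp_exp b a (?k i))) $ M
      = (\<Sum>i\<le>2 * L. if M = nat (jtp_exp b a (?k i)) then zpow c c' (?k i) else 0)"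
    unfolding fps_sum_nth by (intro sum.cong refl) (simp only: fps_const_mult_X_power_nth)
  also have "\<dots> = (\<Sum>i\<in>{i. i \<le> 2 * L \<and> jtp_exp b a (?k i) = int M}. zpow c c' (?k i))"
    using jtp_exp_bounds(1)[OF ab] by (intro sum.mono_neutral_cong_right) auto
  also have "\<dots> = (\<Sum>k | jtp_exp b a k = int M. zpow c c' k)"
  proof (rule sum.reindex_bij_witness[of _ "\<lambda>k. nat (k + int L)" ?k])
    fix k
    assume k: "k \<in> {k. jtp_exp b a k = int M}"
    then have "\<bar>k\<bar> \<le> int N + 1"
      using jtp_exp_bounds(2)[OF ab, of k] M by simp
    then show "nat (k + int L) \<in> {i. i \<le> 2 * L \<and> jtp_exp b a (?k i) = int M}" "?k (nat (k + int L)) = k"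
      using L k by auto
  qed auto
  finally show ?thesis
    by (simp add: exp_series_nth)
qed

text \<open>Truncated form of the Jacobi triple product
  \<open>(q\<^sup>b; q\<^sup>b)\<^sub>\<infinity> \<Prod>\<^sub>k\<^sub>\<ge>\<^sub>0 (1 + c q\<^bsup>b(k+1)-a\<^esup>)(1 + c\<^sup>-\<^sup>1 q\<^bsup>bk+a\<^esup>) = \<Sum>\<^sub>k c\<^sup>k q\<^bsup>bk(k+1)/2 - ak\<^esup>\<close>.\<close>

lemma jtp_prod_eq_upto:
  fixes c c' :: "'a::comm_ring_1"
  assumes "c * c' = 1" "a < b" "L \<ge> 2 * N + 2"
  shows "fps_eq_upto N (qpoch (fps_X ^ b) L * jtp_prod b a c c' L) (exp_series (zpow c c') (jtp_exp b a))"
proof -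
  have "fps_eq_upto N
      (\<Sum>i\<le>2 * L. fps_const (zpow c c' (int i - int L)) * fps_X ^ nat (jtp_exp b a (int i - int L)))
      (exp_series (zpow c c') (jtp_exp b a))"
    unfolding fps_eq_upto_def using jtp_terms_nth[OF assms(2,3)] by blast
  with qpoch_mult_jtp_prod_eq_upto[OF assms] show ?thesis
    by (rule fps_eq_upto_trans)
qed

section \<open>The identity \<open>f\<^sub>1\<^sup>5 = f\<^sub>2\<^sup>2 \<Sum>\<^sub>k (6k+1) q\<^bsup>k(3k+1)/2\<^esup>\<close>\<close>

definition parity_sign :: "int \<Rightarrow> 'a::comm_ring_1" where
  "parity_sign k = (if even k then 1 else -1)"

lemma parity_sign_add: "parity_sign (a + b) = (parity_sign a * parity_sign b :: 'a::comm_ring_1)"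
  by (simp add: parity_sign_def)

text \<open>Differentiating \<open>\<Sum>\<^sub>n (-z\<^sup>-\<^sup>1)\<^sup>n q\<^bsup>n(n+1)/2\<^esup> \<Sum>\<^sub>m (-z\<^sup>2)\<^sup>m q\<^bsup>m\<^sup>2\<^esup>\<close> at \<open>z = 1\<close> gives
  the weights \<open>dz_weight\<close> at the exponents \<open>dz_exp\<close>; the product of Euler's series in \<open>q\<^sup>2\<close>
  with \<open>\<Sum>\<^sub>k (6k+1) q\<^bsup>k(3k+1)/2\<^esup>\<close> has weights \<open>quint_weight\<close> at exponents \<open>quint_exp\<close>.\<close>

definition dz_weight :: "int \<times> int \<Rightarrow> 'a::comm_ring_1" where
  "dz_weight p = parity_sign (fst p + snd p) * of_int (2 * snd p - fst p)"

definition dz_exp :: "int \<times> int \<Rightarrow> int" where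
  "dz_exp p = jtp_exp 1 0 (fst p) + jtp_exp 2 1 (snd p)"

definition quint_weight :: "int \<times> int \<Rightarrow> 'a::comm_ring_1" where
  "quint_weight p = parity_sign (fst p) * of_int (6 * snd p + 1)"

definition quint_exp :: "int \<times> int \<Rightarrow> int" where
  "quint_exp p = jtp_exp 6 2 (fst p) + jtp_exp 3 1 (snd p)"

lemma dz_exp_fibre_finite: "finite {p. dz_exp p = int M}"
proof (rule finite_subset)
  show "{p. dz_exp p = int M} \<subseteq> {k. jtp_exp 1 0 k \<le> int M} \<times> {k. jtp_exp 2 1 k \<le> int M}"
  proof
    fix p
    assume "p \<in> {p. dz_exp p = int M}"
    moreover have "jtp_exp 1 0 (fst p) \<ge> 0" "jtp_exp 2 1 (snd p) \<ge> 0"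
      by (simp_all add: jtp_exp_bounds)
    ultimately show "p \<in> {k. jtp_exp 1 0 k \<le> int M} \<times> {k. jtp_exp 2 1 k \<le> int M}"
      by (cases p) (simp add: dz_exp_def)
  qed
  show "finite ({k. jtp_exp 1 0 k \<le> int M} \<times> {k. jtp_exp 2 1 k \<le> int M})"
    by (intro finite_cartesian_product jtp_exp_le_finite) simp_all
qed

text \<open>The pairs \<open>(n, m)\<close> are sorted by the residue of \<open>2m - n\<close> modulo 3. Residues 0 and 1
  are parametrised by \<open>lift0\<close> and \<open>lift1\<close>, which carry \<open>quint_exp\<close> to \<open>dz_exp\<close>; on residue 2
  the involution \<open>flip2\<close> preserves \<open>dz_exp\<close> and reverses the sign of \<open>dz_weight\<close>.\<close>

definition dz_class :: "int \<times> int \<Rightarrow> int" where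
  "dz_class p = (2 * snd p - fst p) mod 3"

definition lift0 :: "int \<times> int \<Rightarrow> int \<times> int" where
  "lift0 p = (2 * fst p + snd p, fst p - snd p)"

definition lower0 :: "int \<times> int \<Rightarrow> int \<times> int" where
  "lower0 p = (snd p - (2 * snd p - fst p) div 3, - ((2 * snd p - fst p) div 3))"

definition lift1 :: "int \<times> int \<Rightarrow> int \<times> int" where
  "lift1 p = (- 2 * fst p - snd p - 1, snd p - fst p)"

definition lower1 :: "int \<times> int \<Rightarrow> int \<times> int" where
  "lower1 p = ((2 * snd p - fst p - 1) div 3 - snd p, (2 * snd p - fst p - 1) div 3)"

definition flip2 :: "int \<times> int \<Rightarrow> int \<times> int" where
  "flip2 p = (let s = (2 * snd p - fst p - 2) div 3 in (s - 2 * snd p, 2 * s + 1 - snd p))"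

lemma dz_exp_lift0: "dz_exp (lift0 p) = quint_exp p"
proof -
  have "2 * dz_exp (lift0 p) = 2 * quint_exp p"
    unfolding dz_exp_def quint_exp_def lift0_def by (simp add: distrib_left jtp_exp_double algebra_simps)
  then show ?thesis by simp
qed

lemma dz_exp_lift1: "dz_exp (lift1 p) = quint_exp p"
proof -
  have "2 * dz_exp (lift1 p) = 2 * quint_exp p"
    unfolding dz_exp_def quint_exp_def lift1_def by (simp add: distrib_left jtp_exp_double algebra_simps)
  then show ?thesis by simp
qed

lemma dz_class_lift0: "dz_class (lift0 p) = 0"
  by (simp add: dz_class_def lift0_def)

lemma dz_class_lift1: "dz_class (lift1 p) = 1"
  by (simp add: dz_class_def lift1_def)

lemma lower0_lift0: "lower0 (lift0 p) = p"
proof -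
  have "(2 * (fst p - snd p) - (2 * fst p + snd p)) div 3 = - snd p"
    by simp
  then show ?thesis
    by (simp add: lower0_def lift0_def)
qed

lemma lift0_lower0: "dz_class p = 0 \<Longrightarrow> lift0 (lower0 p) = p"
  unfolding dz_class_def lift0_def lower0_def by (cases p) auto

lemma lower1_lift1: "lower1 (lift1 p) = p"
proof -
  have "(2 * (snd p - fst p) - (- 2 * fst p - snd p - 1) - 1) div 3 = snd p"
    by simp
  then show ?thesis
    by (simp add: lower1_def lift1_def)
qed

lemma lift1_lower1: "dz_class p = 1 \<Longrightarrow> lift1 (lower1 p) = p"
proof -
  assume "dz_class p = 1"
  then have "2 * snd p - fst p = 3 * ((2 * snd p - fst p - 1) div 3) + 1"
    unfolding dz_class_def by presburger
  then show ?thesis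
    by (simp add: lower1_def lift1_def prod_eq_iff)
qed

lemma flip2_facts:
  assumes "dz_class p = 2"
  shows "flip2 (flip2 p) = p" "dz_class (flip2 p) = 2" "dz_exp (flip2 p) = dz_exp p"
    "dz_weight (flip2 p) = - (dz_weight p :: 'a::comm_ring_1)"
proof -
  obtain n m where p: "p = (n, m)"
    by (cases p)
  define s where "s = (2 * m - n - 2) div 3"
  have r: "2 * m - n = 3 * s + 2"
    using assms unfolding p s_def dz_class_def by simp presburger
  have f: "flip2 p = (s - 2 * m, 2 * s + 1 - m)"
    unfolding flip2_def p Let_def s_def by simp
  have r': "2 * (2 * s + 1 - m) - (s - 2 * m) = 3 * s + 2"
    by simp
  have "(3 * s + 2 - 2) div 3 = s"
    by simp
  then show "flip2 (flip2 p) = p"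
    unfolding f unfolding flip2_def Let_def using r r' p by simp
  show "dz_class (flip2 p) = 2"
    unfolding f dz_class_def using r' by simp
  have n: "n = 2 * m - 3 * s - 2"
    using r by simp
  have "2 * dz_exp (flip2 p) = 2 * dz_exp p"
    unfolding f unfolding p dz_exp_def distrib_left jtp_exp_double by (simp add: n algebra_simps)
  then show "dz_exp (flip2 p) = dz_exp p"
    by simp
  have "even (s - 2 * m + (2 * s + 1 - m)) \<longleftrightarrow> \<not> even (n + m)"
    using r by presburger
  then show "dz_weight (flip2 p) = - (dz_weight p :: 'a)"
    unfolding f unfolding p dz_weight_def parity_sign_def using r r' by simp
qed

lemma dz_weight_lift0_lift1: "dz_weight (lift0 p) + dz_weight (lift1 p) = - (quint_weight p :: 'a::comm_ring_1)"
proof -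
  obtain j k where p: "p = (j, k)"
    by (cases p)
  have "even (2 * j + k + (j - k)) \<longleftrightarrow> even j" "even (- 2 * j - k - 1 + (k - j)) \<longleftrightarrow> \<not> even j"
    by presburger+
  then have "dz_weight (lift0 p) = parity_sign j * (- 3 * (of_int k :: 'a))"
      "dz_weight (lift1 p) = - parity_sign j * (3 * (of_int k :: 'a) + 1)"
      "quint_weight p = parity_sign j * (6 * (of_int k :: 'a) + 1)"
    unfolding p lift0_def lift1_def dz_weight_def quint_weight_def parity_sign_def by simp_all
  then show ?thesis
    by (simp add: algebra_simps)
qed

lemma sum_dz_weight_class0:
  "(\<Sum>p | dz_exp p = int M \<and> dz_class p = 0. dz_weight p) = (\<Sum>p | quint_exp p = int M. dz_weight (lift0 p))"
proof (rule sum.reindex_bij_witness[of _ lift0 lower0])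
  fix p
  assume p: "p \<in> {p. dz_exp p = int M \<and> dz_class p = 0}"
  then show "lift0 (lower0 p) = p"
    by (simp add: lift0_lower0)
  then show "lower0 p \<in> {p. quint_exp p = int M}"
    using p dz_exp_lift0[of "lower0 p"] by simp
  show "dz_weight (lift0 (lower0 p)) = dz_weight p"
    using \<open>lift0 (lower0 p) = p\<close> by simp
qed (simp_all add: lower0_lift0 dz_exp_lift0 dz_class_lift0)

lemma sum_dz_weight_class1:
  "(\<Sum>p | dz_exp p = int M \<and> dz_class p = 1. dz_weight p) = (\<Sum>p | quint_exp p = int M. dz_weight (lift1 p))"
proof (rule sum.reindex_bij_witness[of _ lift1 lower1])
  fix p
  assume p: "p \<in> {p. dz_exp p = int M \<and> dz_class p = 1}"
  then show "lift1 (lower1 p) = p"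
    by (simp add: lift1_lower1)
  then show "lower1 p \<in> {p. quint_exp p = int M}"
    using p dz_exp_lift1[of "lower1 p"] by simp
  show "dz_weight (lift1 (lower1 p)) = dz_weight p"
    using \<open>lift1 (lower1 p) = p\<close> by simp
qed (simp_all add: lower1_lift1 dz_exp_lift1 dz_class_lift1)

lemma sum_dz_weight_class2:
  "(\<Sum>p | dz_exp p = int M \<and> dz_class p = 2. dz_weight p :: 'a::field_char_0) = 0"
proof -
  let ?A = "{p. dz_exp p = int M \<and> dz_class p = 2}"
  have "(\<Sum>p\<in>?A. dz_weight p :: 'a) = (\<Sum>p\<in>?A. dz_weight (flip2 p))"
    by (rule sum.reindex_bij_witness[of _ flip2 flip2]) (auto simp: flip2_facts)
  also have "\<dots> = - (\<Sum>p\<in>?A. dz_weight p)"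
    by (simp add: flip2_facts sum_negf)
  finally show ?thesis
    by simp
qed

lemma exp_series_dz_eq: "exp_series (dz_weight :: _ \<Rightarrow> 'a::field_char_0) dz_exp = - exp_series quint_weight quint_exp"
proof (rule fps_ext)
  fix M
  let ?F = "\<lambda>r. {p. dz_exp p = int M \<and> dz_class p = r}"
  have fin: "finite (?F r)" for r
    by (rule finite_subset[OF _ dz_exp_fibre_finite[of M]]) blast
  have "{p. dz_exp p = int M} = ?F 0 \<union> (?F 1 \<union> ?F 2)"
    unfolding dz_class_def by auto
  then have "(\<Sum>p | dz_exp p = int M. dz_weight p) = sum (dz_weight :: _ \<Rightarrow> 'a) (?F 0 \<union> (?F 1 \<union> ?F 2))"
    by (simp only:)
  also have "\<dots> = sum dz_weight (?F 0) + (sum dz_weight (?F 1) + sum dz_weight (?F 2))"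
    using fin by (simp add: sum.union_disjoint disjoint_iff)
  also have "\<dots> = (\<Sum>p | quint_exp p = int M. dz_weight (lift0 p)) + ((\<Sum>p | quint_exp p = int M. dz_weight (lift1 p)) + 0)"
    by (simp only: sum_dz_weight_class0 sum_dz_weight_class1 sum_dz_weight_class2)
  also have "\<dots> = (\<Sum>p | quint_exp p = int M. dz_weight (lift0 p) + dz_weight (lift1 p))"
    by (simp add: sum.distrib)
  also have "\<dots> = - (\<Sum>p | quint_exp p = int M. quint_weight p)"
    by (simp add: dz_weight_lift0_lift1 sum_negf)
  finally show "exp_series dz_weight dz_exp $ M = (- exp_series quint_weight quint_exp :: 'a fps) $ M"
    by (simp add: exp_series_nth)
qed

text \<open>A series in \<open>q\<close> and \<open>z\<close> is represented as a power series in \<open>q\<close> whose coefficients are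
  power series in \<open>\<epsilon>\<close>, where \<open>z = 1 + \<epsilon>\<close>. Thus \<open>inner_nth 0\<close> evaluates at \<open>z = 1\<close> and
  \<open>inner_nth 1\<close> takes the derivative with respect to \<open>z\<close> at \<open>z = 1\<close>.\<close>

definition inner_nth :: "nat \<Rightarrow> 'a::comm_ring_1 fps fps \<Rightarrow> 'a fps" where
  "inner_nth k F = Abs_fps (\<lambda>M. F $ M $ k)"

lemma inner_nth_nth [simp]: "inner_nth k F $ M = F $ M $ k"
  by (simp add: inner_nth_def)

lemma inner_nth_add [simp]: "inner_nth k (F + H) = inner_nth k F + inner_nth k H"
  by (rule fps_ext) simp

lemma inner_nth_diff [simp]: "inner_nth k (F - H) = inner_nth k F - inner_nth k H"
  by (rule fps_ext) simp

lemma inner_nth_one [simp]: "inner_nth k 1 = (if k = 0 then 1 else 0)"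
  by (rule fps_ext) simp

lemma inner_nth_const [simp]: "inner_nth k (fps_const c) = fps_const (c $ k)"
  by (rule fps_ext) simp

lemma inner_nth_X_power [simp]: "inner_nth k (fps_X ^ n) = (if k = 0 then fps_X ^ n else 0)"
  by (rule fps_ext) simp

lemma inner_nth_X [simp]: "inner_nth k fps_X = (if k = 0 then fps_X else 0)"
  by (rule fps_ext) simp

lemma inner_nth_0_mult: "inner_nth 0 (F * H) = inner_nth 0 F * inner_nth 0 H"
  by (rule fps_ext) (simp add: fps_mult_nth fps_sum_nth)

lemma inner_nth_1_mult: "inner_nth 1 (F * H) = inner_nth 0 F * inner_nth 1 H + inner_nth 1 F * inner_nth 0 H"
  by (rule fps_ext) (simp add: fps_mult_nth fps_sum_nth fps_mult_nth_1 sum.distrib)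

lemma inner_nth_0_prod: "inner_nth 0 (prod f S) = (\<Prod>i\<in>S. inner_nth 0 (f i))"
  by (induction S rule: infinite_finite_induct) (simp_all add: inner_nth_0_mult)

lemma inner_nth_eq_upto: "fps_eq_upto N F H \<Longrightarrow> fps_eq_upto N (inner_nth k F) (inner_nth k H)"
  by (simp add: fps_eq_upto_def)

lemma inner_nth_exp_series: "inner_nth k (exp_series w e) = exp_series (\<lambda>x. w x $ k) e"
  by (rule fps_ext) (simp add: exp_series_nth fps_sum_nth)

lemma inner_nth_0_qpoch: "inner_nth 0 (qpoch (fps_X ^ b) L) = qpoch (fps_X ^ b) L"
  by (induction L) (simp_all add: qpoch_Suc inner_nth_0_mult flip: power_mult)

lemma inner_nth_1_qpoch: "inner_nth 1 (qpoch ((fps_X :: 'a::comm_ring_1 fps fps) ^ b) L) = 0"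
proof (induction L)
  case 0
  then show ?case by simp
next
  case (Suc L)
  have "inner_nth 1 (1 - ((fps_X :: 'a::comm_ring_1 fps fps) ^ b) ^ Suc L) = 0"
    by (simp only: inner_nth_diff inner_nth_one inner_nth_X_power flip: power_mult) simp
  then show ?case
    by (simp only: qpoch_Suc inner_nth_1_mult Suc.IH mult_zero_left mult_zero_right add_0)
qed

lemma inner_nth_0_jtp_prod: "inner_nth 0 (jtp_prod b a c c' L) = jtp_prod b a (c $ 0) (c' $ 0) L"
  unfolding jtp_prod_def inner_nth_0_prod by (simp add: inner_nth_0_mult)

definition zeta :: "'a::field fps" where
  "zeta = 1 + fps_X"

definition zeta_inv :: "'a::field fps" where
  "zeta_inv = inverse zeta"

lemma zeta_nth: "zeta $ 0 = 1" "zeta $ 1 = 1"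
  by (simp_all add: zeta_def)

lemma zeta_mult_zeta_inv: "zeta * zeta_inv = 1"
  unfolding zeta_inv_def by (rule inverse_mult_eq_1') (simp add: zeta_nth)

lemma zeta_inv_nth: "zeta_inv $ 0 = 1" "zeta_inv $ 1 = -1"
proof -
  have "(zeta * zeta_inv) $ 0 = 1"
    by (simp add: zeta_mult_zeta_inv)
  then show zi0: "zeta_inv $ 0 = 1"
    by (simp add: zeta_nth)
  have "(zeta * zeta_inv) $ 1 = 0"
    by (simp add: zeta_mult_zeta_inv)
  then show "zeta_inv $ 1 = -1"
    by (simp add: zeta_nth zi0 fps_mult_nth_1 eq_neg_iff_add_eq_0 flip: One_nat_def)
qed

lemma zeta_power2_nth: "(zeta ^ 2) $ 0 = 1" "(zeta ^ 2) $ 1 = 2" "(zeta_inv ^ 2) $ 0 = 1" "(zeta_inv ^ 2) $ 1 = -2"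
  by (simp_all add: zeta_nth zeta_inv_nth power2_eq_square fps_mult_nth_1 flip: One_nat_def)

lemma minus_power_nth_0_1:
  fixes u :: "'a::comm_ring_1 fps"
  assumes "u $ 0 = 1"
  shows "((- u) ^ k) $ 0 = (-1) ^ k \<and> ((- u) ^ k) $ 1 = (-1) ^ k * of_nat k * u $ 1"
proof (induction k)
  case 0
  then show ?case by simp
next
  case (Suc k)
  then show ?case
    using assms by (simp add: fps_mult_nth_1 algebra_simps)
qed

lemma parity_sign_of_nat: "parity_sign (int k) = (-1) ^ k" and parity_sign_minus_of_nat: "parity_sign (- int k) = (-1) ^ k"
  by (simp_all add: parity_sign_def)

lemma zpow_nth_0_1:
  assumes "u $ 0 = 1" "u' $ 0 = 1" "u' $ 1 = - u $ 1"
  shows "zpow (- u) (- u') n $ 0 = parity_sign n \<and> zpow (- u) (- u') n $ 1 = parity_sign n * of_int n * u $ 1"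
proof (cases "n \<ge> 0")
  case True
  then obtain k where "n = int k"
    by (metis nonneg_int_cases)
  then show ?thesis
    using minus_power_nth_0_1[OF assms(1), of k] by (simp add: zpow_def parity_sign_of_nat)
next
  case False
  then obtain k where "n = - int k"
    by (metis nonpos_int_cases not_le order_less_imp_le)
  then show ?thesis
    using False minus_power_nth_0_1[OF assms(2), of k] assms(3)
    by (simp add: zpow_def parity_sign_minus_of_nat)
qed

lemma zpow_zeta_product_nth_1:
  "(zpow (- zeta_inv) (- zeta) n * zpow (- (zeta ^ 2)) (- (zeta_inv ^ 2)) m) $ 1 = (dz_weight (n, m) :: 'a::field)"
proof -
  have A: "zpow (- zeta_inv) (- (zeta :: 'a fps)) n $ 0 = parity_sign n" "zpow (- zeta_inv) (- (zeta :: 'a fps)) n $ 1 = - parity_sign n * of_int n"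
    using zpow_nth_0_1[of "zeta_inv :: 'a fps" zeta n] by (simp_all add: zeta_nth zeta_inv_nth flip: One_nat_def)
  have B: "zpow (- (zeta ^ 2)) (- (zeta_inv ^ 2 :: 'a fps)) m $ 0 = parity_sign m"
      "zpow (- (zeta ^ 2)) (- (zeta_inv ^ 2 :: 'a fps)) m $ 1 = parity_sign m * of_int m * 2"
    using zpow_nth_0_1[of "zeta ^ 2 :: 'a fps" "zeta_inv ^ 2" m] by (simp_all add: zeta_power2_nth flip: One_nat_def)
  show ?thesis
    by (simp only: fps_mult_nth_1 A B) (simp add: dz_weight_def parity_sign_add algebra_simps)
qed

lemma qpoch_X_eq_prod_lessThan: "qpoch (fps_X :: 'a::comm_ring_1 fps) L = (\<Prod>k<L. 1 - fps_X ^ (k + 1))"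
  unfolding qpoch_def using prod.atLeast1_atMost_eq[of "\<lambda>j. 1 - (fps_X :: 'a fps) ^ j" L] by simp

definition qpoch_odd :: "nat \<Rightarrow> 'a::comm_ring_1 fps" where
  "qpoch_odd L = (\<Prod>k<L. 1 - fps_X ^ (2 * k + 1))"

lemma qpoch_odd_mult_qpoch_even: "qpoch_odd L * qpoch ((fps_X :: 'a::comm_ring_1 fps) ^ 2) L = qpoch fps_X (2 * L)"
proof (induction L)
  case 0
  then show ?case by (simp add: qpoch_odd_def)
next
  case (Suc L)
  have two: "2 * Suc L = Suc (Suc (2 * L))"
    by simp
  have a: "qpoch (fps_X :: 'a fps) (2 * Suc L)
      = qpoch fps_X (2 * L) * (1 - fps_X ^ Suc (2 * L)) * (1 - fps_X ^ Suc (Suc (2 * L)))"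
    by (simp only: two qpoch_Suc)
  have b: "qpoch ((fps_X :: 'a fps) ^ 2) (Suc L) = qpoch (fps_X ^ 2) L * (1 - fps_X ^ Suc (Suc (2 * L)))"
    by (simp only: qpoch_Suc two flip: power_mult)
  have c: "qpoch_odd (Suc L) = qpoch_odd L * (1 - (fps_X :: 'a fps) ^ Suc (2 * L))"
    by (simp add: qpoch_odd_def)
  show ?case
    unfolding a b c Suc.IH[symmetric] by (simp only: ac_simps)
qed

text \<open>Euler's pentagonal number theorem in \<open>q\<^sup>2\<close> is the case \<open>b = 6\<close>, \<open>a = 2\<close>, \<open>c = -1\<close>
  of the triple product.\<close>

lemma qpoch_mult_jtp_prod_6_2:
  "qpoch ((fps_X :: 'a::comm_ring_1 fps) ^ 6) L * jtp_prod 6 2 (-1) (-1) L = qpoch (fps_X ^ 2) (3 * L)"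
proof (induction L)
  case 0
  then show ?case by (simp add: jtp_prod_def)
next
  case (Suc L)
  have e: "6 * Suc L = 2 * Suc (Suc (Suc (3 * L)))" "3 * Suc L = Suc (Suc (Suc (3 * L)))"
    "6 * (L + 1) - 2 = 2 * Suc (Suc (3 * L))" "6 * L + 2 = 2 * Suc (3 * L)"
    by simp_all
  have "jtp_prod 6 2 (-1) (-1) (Suc L)
      = jtp_prod 6 2 (-1) (-1) L * ((1 - fps_X ^ (6 * (L + 1) - 2)) * (1 - (fps_X :: 'a fps) ^ (6 * L + 2)))"
    by (simp add: jtp_prod_def flip: fps_const_neg)
  moreover have "qpoch ((fps_X :: 'a fps) ^ 2) (3 * Suc L) = qpoch (fps_X ^ 2) (3 * L) * (1 - fps_X ^ (2 * Suc (3 * L)))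
      * (1 - fps_X ^ (2 * Suc (Suc (3 * L)))) * (1 - fps_X ^ (2 * Suc (Suc (Suc (3 * L)))))"
    by (simp only: e(2) qpoch_Suc flip: power_mult)
  moreover have "qpoch ((fps_X :: 'a fps) ^ 6) (Suc L) = qpoch (fps_X ^ 6) L * (1 - fps_X ^ (2 * Suc (Suc (Suc (3 * L)))))"
    by (simp only: qpoch_Suc e(1) flip: power_mult)
  ultimately show ?case
    unfolding e(3,4) Suc.IH[symmetric] by (simp only: ac_simps)
qed

lemma jtp_prod_2_1_minus_one: "jtp_prod 2 1 (-1) (-1) L = (qpoch_odd L :: 'a::comm_ring_1 fps) ^ 2"
  unfolding jtp_prod_def qpoch_odd_def power2_eq_square prod.distrib[symmetric]
  by (rule prod.cong) (simp_all flip: fps_const_neg)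

lemma jtp_prod_1_0_Suc:
  "jtp_prod 1 0 c c' (Suc L) = (1 + fps_const c') * ((1 + fps_const c * fps_X)
     * (\<Prod>k<L. (1 + fps_const c * fps_X ^ (k + 2)) * (1 + fps_const c' * fps_X ^ (k + 1))))"
  unfolding jtp_prod_def by (subst prod.lessThan_Suc_shift) (simp add: ac_simps)

text \<open>At \<open>z = 1\<close> the first product has the factor \<open>1 - z\<close>; so only its derivative survives.\<close>

lemma inner_nth_1_plus_minus_zeta:
  "inner_nth 0 (1 + fps_const (- zeta)) = (0 :: 'a::field fps)" "inner_nth 1 (1 + fps_const (- zeta)) = (-1 :: 'a fps)"
  by (simp_all add: zeta_nth flip: fps_const_neg One_nat_def)

lemma inner_nth_0_jtp_prod_zeta: "inner_nth 0 (jtp_prod 1 0 (- zeta_inv) (- zeta) (Suc L)) = (0 :: 'a::field fps)"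
  unfolding jtp_prod_1_0_Suc inner_nth_0_mult inner_nth_1_plus_minus_zeta by simp

lemma inner_nth_1_jtp_prod_zeta:
  "inner_nth 1 (jtp_prod 1 0 (- zeta_inv) (- zeta) (Suc L)) = - (qpoch fps_X (Suc L) * qpoch (fps_X :: 'a::field fps) L)"
proof -
  let ?R = "(1 + fps_const (- zeta_inv) * fps_X)
    * (\<Prod>k<L. (1 + fps_const (- zeta_inv) * fps_X ^ (k + 2)) * (1 + fps_const (- zeta) * fps_X ^ (k + 1))) :: 'a fps fps"
  have "inner_nth 0 ?R = (1 - fps_X) * (\<Prod>k<L. (1 - fps_X ^ (k + 2)) * (1 - fps_X ^ (k + 1)))"
    unfolding inner_nth_0_mult inner_nth_0_prod
    by (simp add: inner_nth_0_mult zeta_nth zeta_inv_nth flip: fps_const_neg)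
  also have "\<dots> = qpoch fps_X (Suc L) * qpoch fps_X L"
    unfolding qpoch_X_eq_prod_lessThan prod.distrib by (subst prod.lessThan_Suc_shift) (simp add: ac_simps)
  finally have R: "inner_nth 0 ?R = qpoch fps_X (Suc L) * qpoch fps_X L" .
  show ?thesis
    unfolding jtp_prod_1_0_Suc inner_nth_1_mult inner_nth_1_plus_minus_zeta R by simp
qed

lemma inner_nth_0_jtp_prod_zeta_power2:
  "inner_nth 0 (jtp_prod 2 1 (- (zeta ^ 2)) (- (zeta_inv ^ 2)) L) = (qpoch_odd L :: 'a::field fps) ^ 2"
  unfolding inner_nth_0_jtp_prod using jtp_prod_2_1_minus_one by (simp add: zeta_power2_nth)

lemma inner_nth_1_jtp_products:
  "inner_nth 1 ((qpoch (fps_X ^ 1) (Suc L) * jtp_prod 1 0 (- zeta_inv) (- zeta) (Suc L))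
      * (qpoch (fps_X ^ 2) (Suc L) * jtp_prod 2 1 (- (zeta ^ 2)) (- (zeta_inv ^ 2)) (Suc L)))
   = - (qpoch fps_X (Suc L) * (qpoch fps_X (Suc L) * qpoch fps_X L) * qpoch (fps_X ^ 2) (Suc L)
        * (qpoch_odd (Suc L) :: 'a::field fps) ^ 2)"
  unfolding inner_nth_1_mult inner_nth_0_mult inner_nth_0_qpoch inner_nth_1_qpoch inner_nth_0_jtp_prod_zeta
    inner_nth_1_jtp_prod_zeta inner_nth_0_jtp_prod_zeta_power2
  by (simp add: ac_simps)

lemma zpow_minus_one: "zpow (-1) (-1) = (parity_sign :: int \<Rightarrow> 'a::comm_ring_1)"
proof
  fix k :: int
  show "zpow (-1) (-1) k = parity_sign k"
  proof (cases "k \<ge> 0")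
    case True
    then obtain n where "k = int n"
      by (metis nonneg_int_cases)
    then show ?thesis
      by (simp add: zpow_def parity_sign_def)
  next
    case False
    then obtain n where "k = - int n"
      by (metis nonpos_int_cases not_le order_less_imp_le)
    then show ?thesis
      using False by (simp add: zpow_def parity_sign_def)
  qed
qed

definition quint_series :: "'a::comm_ring_1 fps" where
  "quint_series = exp_series (\<lambda>k. of_int (6 * k + 1)) (jtp_exp 3 1)"

lemma inner_nth_1_exp_series_products:
  "inner_nth 1 (exp_series (zpow (- zeta_inv) (- zeta)) (jtp_exp 1 0)
     * exp_series (zpow (- (zeta ^ 2)) (- (zeta_inv ^ 2))) (jtp_exp 2 1))
   = (exp_series dz_weight dz_exp :: 'a::field fps)"
proof -
  have "(\<lambda>(n, m). jtp_exp 1 0 n + jtp_exp 2 1 m) = dz_exp"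
    by (auto simp: dz_exp_def fun_eq_iff)
  moreover have "(\<lambda>p. (case p of (n, m) \<Rightarrow> zpow (- zeta_inv) (- zeta) n * zpow (- (zeta ^ 2)) (- (zeta_inv ^ 2)) m) $ 1)
      = (dz_weight :: _ \<Rightarrow> 'a)"
  proof
    fix p :: "int \<times> int"
    show "(case p of (n, m) \<Rightarrow> zpow (- zeta_inv) (- zeta) n * zpow (- (zeta ^ 2)) (- (zeta_inv ^ 2)) m) $ 1
        = (dz_weight p :: 'a)"
      by (cases p) (simp only: prod.case zpow_zeta_product_nth_1)
  qed
  ultimately show ?thesis
    by (subst exp_series_mult) (simp_all add: jtp_exp_bounds jtp_exp_fibre_finite inner_nth_exp_series)
qed

lemma exp_series_quint_weight:
  "exp_series quint_weight quint_exp = exp_series parity_sign (jtp_exp 6 2) * (quint_series :: 'a::comm_ring_1 fps)"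
proof -
  have "(\<lambda>(j, k). jtp_exp 6 2 j + jtp_exp 3 1 k) = quint_exp"
    by (auto simp: quint_exp_def fun_eq_iff)
  moreover have "(\<lambda>(j, k). parity_sign j * of_int (6 * k + 1)) = (quint_weight :: _ \<Rightarrow> 'a)"
    by (auto simp: quint_weight_def fun_eq_iff)
  ultimately show ?thesis
    unfolding quint_series_def by (subst exp_series_mult) (simp_all add: jtp_exp_bounds jtp_exp_fibre_finite)
qed

lemma euler_eq_upto:
  "L \<ge> 2 * N + 2 \<Longrightarrow> fps_eq_upto N (qpoch ((fps_X :: 'a::comm_ring_1 fps) ^ 2) (3 * L)) (exp_series parity_sign (jtp_exp 6 2))"
  using jtp_prod_eq_upto[of "-1::'a" "-1" 2 6 N L] unfolding qpoch_mult_jtp_prod_6_2 zpow_minus_one by simp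

text \<open>The derivative at \<open>z = 1\<close> of the product of the triple products with
  \<open>(b, a, c) = (1, 0, -z\<^sup>-\<^sup>1)\<close> and \<open>(2, 1, -z\<^sup>2)\<close>, to order \<open>N\<close>.\<close>

lemma jtp_products_eq_upto:
  assumes "L \<ge> 2 * N + 1"
  shows "fps_eq_upto N (qpoch fps_X (Suc L) * (qpoch fps_X (Suc L) * qpoch fps_X L) * qpoch (fps_X ^ 2) (Suc L)
      * qpoch_odd (Suc L) ^ 2) (exp_series parity_sign (jtp_exp 6 2) * (quint_series :: 'a::field_char_0 fps))"
proof -
  have L: "Suc L \<ge> 2 * N + 2"
    using assms by simp
  have A: "(- zeta_inv) * (- zeta) = (1 :: 'a fps)"
    using zeta_mult_zeta_inv by (simp add: mult.commute)
  have B: "(- (zeta ^ 2)) * (- (zeta_inv ^ 2)) = (1 :: 'a fps)"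
    by (simp add: zeta_mult_zeta_inv flip: power_mult_distrib)
  have "fps_eq_upto N
      (inner_nth 1 ((qpoch (fps_X ^ 1) (Suc L) * jtp_prod 1 0 (- zeta_inv) (- (zeta :: 'a fps)) (Suc L))
        * (qpoch (fps_X ^ 2) (Suc L) * jtp_prod 2 1 (- (zeta ^ 2)) (- (zeta_inv ^ 2)) (Suc L))))
      (inner_nth 1 (exp_series (zpow (- zeta_inv) (- zeta)) (jtp_exp 1 0)
        * exp_series (zpow (- (zeta ^ 2)) (- (zeta_inv ^ 2))) (jtp_exp 2 1)))"
    by (intro inner_nth_eq_upto fps_eq_upto_mult jtp_prod_eq_upto[OF A _ L] jtp_prod_eq_upto[OF B _ L]) simp_all
  then show ?thesis
    unfolding inner_nth_1_jtp_products inner_nth_1_exp_series_products exp_series_dz_eq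
      exp_series_quint_weight
    by (simp add: fps_eq_upto_def)
qed

lemma qpoch_X_eq_upto: "N \<le> k \<Longrightarrow> fps_eq_upto N (qpoch (fps_X :: 'a::comm_ring_1 fps) k) (qpoch fps_X N)"
  using qpoch_eq_upto[of 1 N k] by simp

text \<open>Multiplying by \<open>f\<^sub>2\<^sup>2\<close> removes \<open>(q; q\<^sup>2)\<^sub>\<infinity>\<^sup>2 = f\<^sub>1\<^sup>2 / f\<^sub>2\<^sup>2\<close>, and the common factor \<open>f\<^sub>2\<close> of
  both sides then cancels.\<close>

theorem f1_pow5_eq_upto:
  "fps_eq_upto N (qpoch fps_X N ^ 5) (qpoch (fps_X ^ 2) N ^ 2 * (quint_series :: 'a::field_char_0 fps))"
proof -
  define L where "L = 2 * N + 1"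
  let ?E1 = "qpoch (fps_X :: 'a fps) N" and ?E2 = "qpoch ((fps_X :: 'a fps) ^ 2) N"
  let ?P = "qpoch fps_X (Suc L) * (qpoch fps_X (Suc L) * qpoch fps_X L) * qpoch ((fps_X :: 'a fps) ^ 2) (Suc L)"
  let ?F = "qpoch ((fps_X :: 'a fps) ^ 2) (Suc L)"
  have N: "N \<le> Suc L" "N \<le> L" "N \<le> 2 * Suc L" "N \<le> 3 * Suc L" "Suc L \<ge> 2 * N + 2"
    unfolding L_def by simp_all
  have "fps_eq_upto N (?P * (qpoch_odd (Suc L) * ?F) ^ 2) (?E1 * (?E1 * ?E1) * ?E2 * ?E1 ^ 2)"
    unfolding qpoch_odd_mult_qpoch_even
    by (intro fps_eq_upto_mult fps_eq_upto_power qpoch_X_eq_upto qpoch_eq_upto N) simp_all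
  then have "fps_eq_upto N (?E1 * (?E1 * ?E1) * ?E2 * ?E1 ^ 2) (?P * (qpoch_odd (Suc L) * ?F) ^ 2)"
    by (rule fps_eq_upto_sym)
  also have "?P * (qpoch_odd (Suc L) * ?F) ^ 2 = ?P * qpoch_odd (Suc L) ^ 2 * ?F ^ 2"
    by (simp only: power_mult_distrib mult.assoc)
  also have "fps_eq_upto N \<dots> (exp_series parity_sign (jtp_exp 6 2) * quint_series * ?F ^ 2)"
    by (rule fps_eq_upto_mult[OF jtp_products_eq_upto fps_eq_upto_refl]) (simp add: L_def)
  also have "fps_eq_upto N \<dots> (qpoch (fps_X ^ 2) (3 * Suc L) * quint_series * ?F ^ 2)"
    using euler_eq_upto[OF N(5)] by (intro fps_eq_upto_mult fps_eq_upto_refl) (rule fps_eq_upto_sym)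
  also have "fps_eq_upto N \<dots> (?E2 * quint_series * ?E2 ^ 2)"
    by (intro fps_eq_upto_mult fps_eq_upto_power qpoch_eq_upto N fps_eq_upto_refl) simp_all
  finally have "fps_eq_upto N (?E2 * ?E1 ^ 5) (?E2 * (?E2 ^ 2 * quint_series))"
    by (simp add: fps_eq_upto_def ac_simps numeral_eq_Suc)
  moreover have "?E2 $ 0 = 1"
    by (rule qpoch_X_power_nth_0) simp
  ultimately show ?thesis
    using fps_eq_upto_mult_cancel_left by blast
qed

section \<open>Congruences modulo a prime\<close>

definition int_multiple :: "nat \<Rightarrow> rat \<Rightarrow> bool" where
  "int_multiple p x \<longleftrightarrow> (\<exists>m::int. x = of_int (int p * m))"

definition int_coeffs :: "rat fps \<Rightarrow> bool" where
  "int_coeffs f \<longleftrightarrow> (\<forall>i. f $ i \<in> \<int>)"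

text \<open>\<open>coeffs_multiple p (f - g)\<close> expresses \<open>f \<equiv> g (mod p)\<close> coefficientwise.\<close>

definition coeffs_multiple :: "nat \<Rightarrow> rat fps \<Rightarrow> bool" where
  "coeffs_multiple p f \<longleftrightarrow> (\<forall>i. int_multiple p (f $ i))"

lemma int_multiple_0 [simp]: "int_multiple p 0"
  unfolding int_multiple_def by (rule exI[of _ 0]) simp

lemma int_multiple_add: "int_multiple p x \<Longrightarrow> int_multiple p y \<Longrightarrow> int_multiple p (x + y)"
  unfolding int_multiple_def by (metis distrib_left of_int_add)

lemma int_multiple_uminus: "int_multiple p x \<Longrightarrow> int_multiple p (- x)"
  unfolding int_multiple_def by (metis mult_minus_right of_int_minus)

lemma int_multiple_mult_Ints: "int_multiple p x \<Longrightarrow> y \<in> \<int> \<Longrightarrow> int_multiple p (x * y)"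
  unfolding int_multiple_def by (elim exE Ints_cases) (metis mult.assoc of_int_mult)

lemma int_multiple_sum: "(\<And>i. i \<in> S \<Longrightarrow> int_multiple p (f i)) \<Longrightarrow> int_multiple p (sum f S)"
  by (induction S rule: infinite_finite_induct) (auto intro: int_multiple_add)

lemma int_coeffs_diff: "int_coeffs f \<Longrightarrow> int_coeffs g \<Longrightarrow> int_coeffs (f - g)"
  unfolding int_coeffs_def by auto

lemma int_coeffs_mult: "int_coeffs f \<Longrightarrow> int_coeffs g \<Longrightarrow> int_coeffs (f * g)"
  unfolding int_coeffs_def fps_mult_nth by (auto intro!: Ints_sum Ints_mult)

lemma int_coeffs_one [simp]: "int_coeffs 1"
  and int_coeffs_X [simp]: "int_coeffs fps_X"
  and int_coeffs_X_power [simp]: "int_coeffs (fps_X ^ n)"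
  unfolding int_coeffs_def by simp_all

lemma int_coeffs_prod: "(\<And>i. i \<in> S \<Longrightarrow> int_coeffs (f i)) \<Longrightarrow> int_coeffs (prod f S)"
  by (induction S rule: infinite_finite_induct) (auto intro: int_coeffs_mult)

lemma int_coeffs_power: "int_coeffs f \<Longrightarrow> int_coeffs (f ^ k)"
  by (induction k) (auto intro: int_coeffs_mult)

lemma int_coeffs_qpoch: "int_coeffs (qpoch (fps_X ^ b) N)"
  unfolding qpoch_def by (intro int_coeffs_prod int_coeffs_diff int_coeffs_one) (simp flip: power_mult)

lemma int_coeffs_quint_series: "int_coeffs quint_series"
  unfolding int_coeffs_def quint_series_def exp_series_nth by (intro allI Ints_sum) simp

lemma fps_inverse_nth_rec:
  fixes f :: "'a::field fps"
  assumes "f $ 0 = 1" "i > 0"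
  shows "inverse f $ i = - (\<Sum>j=1..i. f $ j * inverse f $ (i - j))"
proof -
  have "0 = (f * inverse f) $ i"
    using assms by (simp add: inverse_mult_eq_1')
  also have "\<dots> = inverse f $ i + (\<Sum>j=1..i. f $ j * inverse f $ (i - j))"
    using assms(1) by (simp add: fps_mult_nth sum.atLeast_Suc_atMost)
  finally show ?thesis
    by (simp add: eq_neg_iff_add_eq_0)
qed

lemma int_coeffs_inverse:
  assumes f: "int_coeffs f" and f0: "f $ 0 = 1"
  shows "int_coeffs (inverse f)"
proof -
  have "inverse f $ i \<in> \<int>" for i
  proof (induction i rule: less_induct)
    case (less i)
    show ?case
    proof (cases "i = 0")
      case True
      then show ?thesis using f0 by simp
    next
      case False
      have "(\<Sum>j=1..i. f $ j * inverse f $ (i - j)) \<in> \<int>"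
        using f less False unfolding int_coeffs_def by (intro Ints_sum Ints_mult) auto
      then show ?thesis
        using False by (simp add: fps_inverse_nth_rec[OF f0])
    qed
  qed
  then show ?thesis
    unfolding int_coeffs_def by blast
qed

lemma coeffs_multiple_add: "coeffs_multiple p f \<Longrightarrow> coeffs_multiple p g \<Longrightarrow> coeffs_multiple p (f + g)"
  unfolding coeffs_multiple_def by (auto intro: int_multiple_add)

lemma coeffs_multiple_uminus: "coeffs_multiple p f \<Longrightarrow> coeffs_multiple p (- f)"
  unfolding coeffs_multiple_def by (auto intro: int_multiple_uminus)

lemma coeffs_multiple_mult_right: "coeffs_multiple p f \<Longrightarrow> int_coeffs g \<Longrightarrow> coeffs_multiple p (f * g)"
  unfolding coeffs_multiple_def int_coeffs_def fps_mult_nth by (auto intro!: int_multiple_sum int_multiple_mult_Ints)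

lemma coeffs_multiple_mult_left: "int_coeffs g \<Longrightarrow> coeffs_multiple p f \<Longrightarrow> coeffs_multiple p (g * f)"
  using coeffs_multiple_mult_right[of p f g] by (simp add: mult.commute)

lemma coeffs_multiple_sum:
  "(\<And>i. i \<in> S \<Longrightarrow> coeffs_multiple p (f i)) \<Longrightarrow> coeffs_multiple p (sum f S)"
  unfolding coeffs_multiple_def fps_sum_nth by (auto intro!: int_multiple_sum)

lemma coeffs_multiple_diff_mult:
  assumes "coeffs_multiple p (a - b)" "coeffs_multiple p (a' - b')" "int_coeffs a'" "int_coeffs b"
  shows "coeffs_multiple p (a * a' - b * b')"
proof -
  have "a * a' - b * b' = (a - b) * a' + b * (a' - b')"
    by (simp add: algebra_simps)
  then show ?thesis
    using assms by (simp add: coeffs_multiple_add coeffs_multiple_mult_right coeffs_multiple_mult_left)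
qed

lemma coeffs_multiple_diff_prod:
  assumes "\<And>i. i \<in> S \<Longrightarrow> coeffs_multiple p (a i - b i)"
    and "\<And>i. i \<in> S \<Longrightarrow> int_coeffs (a i)" "\<And>i. i \<in> S \<Longrightarrow> int_coeffs (b i)"
  shows "coeffs_multiple p (prod a S - prod b S)"
  using assms
proof (induction S rule: infinite_finite_induct)
  case (insert x F)
  have "coeffs_multiple p (a x * prod a F - b x * prod b F)"
    using insert by (intro coeffs_multiple_diff_mult int_coeffs_prod) auto
  then show ?case
    using insert by simp
qed (simp_all add: coeffs_multiple_def)

lemma coeffs_multiple_diff_power:
  assumes "coeffs_multiple p (a - b)" "int_coeffs a" "int_coeffs b"
  shows "coeffs_multiple p (a ^ k - b ^ k)"
  using coeffs_multiple_diff_prod[of "{..<k}" p "\<lambda>_. a" "\<lambda>_. b"] assms by simp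

lemma coeffs_multiple_diff_inverse:
  assumes "coeffs_multiple p (f - g)" "int_coeffs f" "int_coeffs g" "f $ 0 = 1" "g $ 0 = 1"
  shows "coeffs_multiple p (inverse f - inverse g)"
proof -
  have "inverse f - inverse g = (inverse f * inverse g) * (g - f)"
    using assms(4,5) by (simp add: algebra_simps inverse_mult_eq_1 inverse_mult_eq_1' mult.assoc[symmetric])
  moreover have "coeffs_multiple p (g - f)"
    using coeffs_multiple_uminus[OF assms(1)] by simp
  ultimately show ?thesis
    using assms by (simp add: coeffs_multiple_mult_left int_coeffs_mult int_coeffs_inverse)
qed

lemma coeffs_multiple_add_power_prime:
  assumes p: "prime p" and f: "int_coeffs f" and g: "int_coeffs g"
  shows "coeffs_multiple p ((f + g) ^ p - (f ^ p + g ^ p))"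
proof -
  have p0: "p \<noteq> 0"
    using p by auto
  have "(f + g) ^ p = (\<Sum>k\<le>p. of_nat (p choose k) * f ^ k * g ^ (p - k))"
    by (rule binomial_ring)
  also have "{..p} = insert 0 (insert p {1..<p})"
    using p0 by auto
  finally have e: "(f + g) ^ p - (f ^ p + g ^ p) = (\<Sum>k\<in>{1..<p}. of_nat (p choose k) * f ^ k * g ^ (p - k))"
    using p0 by (simp add: algebra_simps)
  show ?thesis
    unfolding e
  proof (rule coeffs_multiple_sum)
    fix k
    assume k: "k \<in> {1..<p}"
    obtain c where c: "p choose k = p * c"
      using dvd_choose_prime[of k p] k p0 p by (auto elim!: dvdE)
    have "coeffs_multiple p (of_nat (p choose k) :: rat fps)"
      unfolding coeffs_multiple_def int_multiple_def c
      by (auto intro!: exI[of _ "if _ = 0 then int c else 0"] simp: of_nat_mult)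
    then show "coeffs_multiple p (of_nat (p choose k) * f ^ k * g ^ (p - k))"
      using f g by (intro coeffs_multiple_mult_right int_coeffs_power) auto
  qed
qed

lemma coeffs_multiple_qpoch_power_prime:
  assumes p: "prime p" "odd p"
  shows "coeffs_multiple p (qpoch (fps_X ^ r) N ^ p - qpoch (fps_X ^ (r * p)) N)"
proof -
  have "coeffs_multiple p ((1 - fps_X ^ m) ^ p - (1 - fps_X ^ (p * m)))" for m
  proof -
    have "coeffs_multiple p ((1 + (- (fps_X ^ m))) ^ p - (1 ^ p + (- ((fps_X :: rat fps) ^ m)) ^ p))"
      by (rule coeffs_multiple_add_power_prime[OF p(1)]) (simp_all add: int_coeffs_def)
    moreover have "(- ((fps_X :: rat fps) ^ m)) ^ p = - (fps_X ^ (p * m))"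
      using p(2) by (simp add: power_minus_odd mult.commute flip: power_mult)
    ultimately show ?thesis
      by simp
  qed
  moreover have "qpoch ((fps_X :: rat fps) ^ r) N ^ p = (\<Prod>i\<in>{1..N}. (1 - fps_X ^ (r * i)) ^ p)"
    unfolding qpoch_def prod_power_distrib by (simp flip: power_mult)
  moreover have "qpoch ((fps_X :: rat fps) ^ (r * p)) N = (\<Prod>i\<in>{1..N}. 1 - fps_X ^ (p * (r * i)))"
    unfolding qpoch_def by (simp add: ac_simps flip: power_mult)
  ultimately show ?thesis
    by (auto intro!: coeffs_multiple_diff_prod int_coeffs_power int_coeffs_diff)
qed

definition series_in_X_power :: "nat \<Rightarrow> rat fps \<Rightarrow> bool" where
  "series_in_X_power p f \<longleftrightarrow> (\<forall>i. \<not> p dvd i \<longrightarrow> f $ i = 0)"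

lemma not_dvd_diff_or_not_dvd: "\<not> p dvd i \<Longrightarrow> j \<le> i \<Longrightarrow> \<not> p dvd j \<or> \<not> p dvd (i - j)"
  for p i j :: nat
  using dvd_add by fastforce

lemma series_in_X_power_mult:
  assumes "series_in_X_power p f" "series_in_X_power p g"
  shows "series_in_X_power p (f * g)"
  unfolding series_in_X_power_def
proof (intro allI impI)
  fix i
  assume "\<not> p dvd i"
  then have "f $ j * g $ (i - j) = 0" if "j \<le> i" for j
    using not_dvd_diff_or_not_dvd[of p i j] that assms unfolding series_in_X_power_def by auto
  then show "(f * g) $ i = 0"
    unfolding fps_mult_nth by (intro sum.neutral) auto
qed

lemma series_in_X_power_one [simp]: "series_in_X_power p 1"
  and series_in_X_power_X_power: "p dvd k \<Longrightarrow> series_in_X_power p (fps_X ^ k)"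
  by (auto simp: series_in_X_power_def)

lemma series_in_X_power_diff:
  "series_in_X_power p f \<Longrightarrow> series_in_X_power p g \<Longrightarrow> series_in_X_power p (f - g)"
  by (simp add: series_in_X_power_def)

lemma series_in_X_power_prod:
  "(\<And>i. i \<in> S \<Longrightarrow> series_in_X_power p (f i)) \<Longrightarrow> series_in_X_power p (prod f S)"
  by (induction S rule: infinite_finite_induct) (auto intro: series_in_X_power_mult)

lemma series_in_X_power_power: "series_in_X_power p f \<Longrightarrow> series_in_X_power p (f ^ k)"
  by (induction k) (auto intro: series_in_X_power_mult)

lemma series_in_X_power_qpoch: "series_in_X_power p (qpoch (fps_X ^ (r * p)) N)"
  unfolding qpoch_def
proof (intro series_in_X_power_prod series_in_X_power_diff series_in_X_power_one)
  fix i
  show "series_in_X_power p ((fps_X ^ (r * p)) ^ i)"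
    unfolding power_mult[symmetric] by (rule series_in_X_power_X_power) simp
qed

lemma series_in_X_power_inverse:
  assumes f: "series_in_X_power p f" and f0: "f $ 0 = 1"
  shows "series_in_X_power p (inverse f)"
proof -
  have "\<not> p dvd i \<longrightarrow> inverse f $ i = 0" for i
  proof (induction i rule: less_induct)
    case (less i)
    show ?case
    proof
      assume i: "\<not> p dvd i"
      then have "i > 0"
        by (intro Nat.gr0I) simp
      have "f $ j * inverse f $ (i - j) = 0" if "j \<in> {1..i}" for j
        using not_dvd_diff_or_not_dvd[of p i j] i that less[of "i - j"] f
        unfolding series_in_X_power_def by auto
      then have "(\<Sum>j=1..i. f $ j * inverse f $ (i - j)) = 0"
        by (rule sum.neutral[rule_format])
      then show "inverse f $ i = 0"
        using \<open>i > 0\<close> by (simp add: fps_inverse_nth_rec[OF f0])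
    qed
  qed
  then show ?thesis
    unfolding series_in_X_power_def by blast
qed

text \<open>Every \<open>k\<close> with \<open>k(3k+1)/2 = M\<close> satisfies \<open>24 M + 1 = (6k+1)\<^sup>2\<close>, so \<open>p\<close> divides
  its weight \<open>6k + 1\<close>.\<close>

lemma quint_series_nth_multiple:
  assumes p: "prime p" and dvd: "int p dvd 24 * int M + 1"
  shows "int_multiple p (quint_series $ M)"
  unfolding quint_series_def exp_series_nth
proof (rule int_multiple_sum)
  fix k
  assume "k \<in> {k. jtp_exp 3 1 k = int M}"
  then have "24 * int M + 1 = 12 * (2 * jtp_exp 3 1 k) + 1"
    by simp
  also have "\<dots> = (6 * k + 1) ^ 2"
    by (simp add: jtp_exp_double power2_eq_square algebra_simps)
  finally have "int p dvd (6 * k + 1) ^ 2"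
    using dvd by simp
  then have "int p dvd 6 * k + 1"
    using p prime_dvd_power[of "int p" "6 * k + 1" 2] by simp
  then obtain c where "6 * k + 1 = int p * c"
    by (elim dvdE)
  then show "int_multiple p (of_int (6 * k + 1))"
    unfolding int_multiple_def by (intro exI[of _ c]) simp
qed

lemma series_in_X_power_mult_quint_series_nth_multiple:
  assumes p: "prime p" and H: "series_in_X_power p H" "int_coeffs H" and dvd: "int p dvd 24 * int N + 1"
  shows "int_multiple p ((H * quint_series) $ N)"
  unfolding fps_mult_nth
proof (rule int_multiple_sum)
  fix i
  assume i: "i \<in> {0..N}"
  show "int_multiple p (H $ i * quint_series $ (N - i))"
  proof (cases "p dvd i")
    case False
    then show ?thesis
      using H(1) unfolding series_in_X_power_def by simp
  next
    case True
    then obtain c where c: "i = p * c"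
      by (auto elim: dvdE)
    have "24 * int (N - i) + 1 = (24 * int N + 1) - int p * (24 * int c)"
      using i c by (simp add: of_nat_diff algebra_simps)
    then have "int p dvd 24 * int (N - i) + 1"
      using dvd by (metis dvd_diff dvd_triv_left)
    then have "int_multiple p (quint_series $ (N - i))"
      by (rule quint_series_nth_multiple[OF p])
    then show ?thesis
      using H(2) unfolding int_coeffs_def by (metis int_multiple_mult_Ints mult.commute)
  qed
qed

section \<open>The congruence for \<open>d\<^sub>p\<^sub>-\<^sub>2\<close>\<close>

lemma f_trunc_eq_qpoch: "f_trunc N r = qpoch (fps_X ^ r) N"
  unfolding f_trunc_def qpoch_def by (simp flip: power_mult)

lemma qpoch_X_power_power_nth_0: "b \<ge> 1 \<Longrightarrow> (qpoch ((fps_X :: 'a::comm_ring_1 fps) ^ b) N ^ k) $ 0 = 1"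
  by (simp add: fps_nth_power_0 qpoch_X_power_nth_0)

text \<open>\<open>f\<^sub>2\<^sup>k / f\<^sub>1\<^bsup>3k+1\<^esup> = (f\<^sub>2\<^bsup>k+2\<^esup> / f\<^sub>1\<^bsup>3(k+2)\<^esup>) (f\<^sub>1\<^sup>5 / f\<^sub>2\<^sup>2)\<close>.\<close>

lemma d_eq_quint_series_nth:
  "d k N = (f_trunc N 2 ^ (k + 2) * inverse (f_trunc N 1 ^ (3 * (k + 2))) * quint_series) $ N"
proof -
  let ?E1 = "qpoch (fps_X :: rat fps) N" and ?E2 = "qpoch ((fps_X :: rat fps) ^ 2) N"
  define V where "V = inverse (?E1 ^ (3 * (k + 2)))"
  have E1: "(?E1 ^ j) $ 0 = 1" for j
    using qpoch_X_power_power_nth_0[of 1] by simp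
  have "3 * (k + 2) = (3 * k + 1) + 5"
    by simp
  then have "V = inverse (?E1 ^ (3 * k + 1) * ?E1 ^ 5)"
    unfolding V_def by (simp only: power_add)
  then have "?E1 ^ 5 * V = inverse (?E1 ^ (3 * k + 1)) * (?E1 ^ 5 * inverse (?E1 ^ 5))"
    by (simp add: fps_inverse_mult ac_simps)
  also have "?E1 ^ 5 * inverse (?E1 ^ 5) = 1"
    by (rule inverse_mult_eq_1') (simp add: E1)
  finally have inv: "inverse (?E1 ^ (3 * k + 1)) = ?E1 ^ 5 * V"
    by simp
  have "d k N = (?E2 ^ k * inverse (?E1 ^ (3 * k + 1))) $ N"
    by (simp only: d_def f_trunc_eq_qpoch power_one_right)
  also have "\<dots> = (?E2 ^ k * ?E1 ^ 5 * V) $ N"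
    by (simp only: inv mult.assoc)
  also have "\<dots> = (?E2 ^ k * (?E2 ^ 2 * quint_series) * V) $ N"
  proof -
    have "fps_eq_upto N (?E2 ^ k * ?E1 ^ 5 * V) (?E2 ^ k * (?E2 ^ 2 * quint_series) * V)"
      by (intro fps_eq_upto_mult fps_eq_upto_refl f1_pow5_eq_upto)
    then show ?thesis
      by (simp add: fps_eq_upto_def)
  qed
  also have "?E2 ^ k * (?E2 ^ 2 * quint_series) * V = ?E2 ^ (k + 2) * V * quint_series"
    by (simp only: power_add ac_simps)
  finally show ?thesis
    unfolding V_def f_trunc_eq_qpoch by simp
qed

text \<open>Modulo \<open>p\<close>, \<open>f\<^sub>2\<^sup>p / f\<^sub>1\<^bsup>3p\<^esup> \<equiv> f\<^sub>2\<^sub>p / f\<^sub>p\<^sup>3\<close>, a series in \<open>q\<^sup>p\<close>.\<close>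

lemma frobenius_nth_cong:
  assumes p: "prime p" "odd p"
  shows "int_multiple p ((f_trunc N 2 ^ p * inverse (f_trunc N 1 ^ (3 * p)) * quint_series) $ M
    - (qpoch (fps_X ^ (2 * p)) N * inverse (qpoch (fps_X ^ p) N ^ 3) * quint_series) $ M)"
proof -
  let ?E1 = "qpoch (fps_X :: rat fps) N" and ?E2 = "qpoch ((fps_X :: rat fps) ^ 2) N"
  let ?Ep = "qpoch ((fps_X :: rat fps) ^ p) N" and ?E2p = "qpoch ((fps_X :: rat fps) ^ (2 * p)) N"
  have p1: "p \<ge> 1"
    using p prime_gt_0_nat by (simp add: Suc_leI)
  have E1: "int_coeffs ?E1" "(?E1 ^ (3 * p)) $ 0 = 1"
    using int_coeffs_qpoch[of 1 N] qpoch_X_power_power_nth_0[of 1] by simp_all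
  have Ep: "(?Ep ^ 3) $ 0 = 1"
    using p1 by (rule qpoch_X_power_power_nth_0)
  have "coeffs_multiple p ((?E1 ^ p) ^ 3 - ?Ep ^ 3)"
    using coeffs_multiple_qpoch_power_prime[OF p, of 1 N] E1(1)
    by (intro coeffs_multiple_diff_power) (simp_all add: int_coeffs_power int_coeffs_qpoch)
  then have "coeffs_multiple p (inverse (?E1 ^ (3 * p)) - inverse (?Ep ^ 3))"
    using E1 Ep by (intro coeffs_multiple_diff_inverse) (simp_all add: int_coeffs_power int_coeffs_qpoch mult.commute flip: power_mult)
  then have "coeffs_multiple p (?E2 ^ p * inverse (?E1 ^ (3 * p)) - ?E2p * inverse (?Ep ^ 3))"
    using coeffs_multiple_qpoch_power_prime[OF p, of 2 N] E1
    by (intro coeffs_multiple_diff_mult int_coeffs_inverse int_coeffs_power) (simp_all add: int_coeffs_qpoch mult.commute)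
  then have "coeffs_multiple p ((?E2 ^ p * inverse (?E1 ^ (3 * p)) - ?E2p * inverse (?Ep ^ 3)) * quint_series)"
    using int_coeffs_quint_series by (rule coeffs_multiple_mult_right)
  then show ?thesis
    unfolding coeffs_multiple_def f_trunc_eq_qpoch by (simp add: algebra_simps)
qed

lemma series_in_X_power_quotient:
  assumes "p \<ge> 1"
  shows "series_in_X_power p (qpoch (fps_X ^ (2 * p)) N * inverse (qpoch (fps_X ^ p) N ^ 3))"
    and "int_coeffs (qpoch (fps_X ^ (2 * p)) N * inverse (qpoch (fps_X ^ p) N ^ 3))"
  using series_in_X_power_qpoch[of p 2 N] series_in_X_power_qpoch[of p 1 N]
    qpoch_X_power_power_nth_0[OF assms, of N 3]
  by (auto intro!: series_in_X_power_mult series_in_X_power_inverse series_in_X_power_power int_coeffs_mult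
      int_coeffs_inverse int_coeffs_power int_coeffs_qpoch simp: mult.commute)

lemma dvd_24_mult_plus_1_shift: "p dvd 24 * t + 1 \<Longrightarrow> int p dvd 24 * int (p * n + t) + 1"
proof -
  assume "p dvd 24 * t + 1"
  then have "int p dvd int (24 * t + 1)"
    by (simp only: int_dvd_int_iff)
  moreover have "24 * int (p * n + t) + 1 = int (24 * t + 1) + int p * (24 * int n)"
    by (simp add: algebra_simps)
  ultimately show ?thesis
    by (metis dvd_add dvd_triv_left)
qed

theorem theorem4p2:
  fixes p t n :: nat
  assumes "prime p" and "p \<ge> 5"
    and "1 \<le> t" and "t \<le> p - 1" and "p dvd 24 * t + 1"
  shows "\<exists>m::int. d (p - 2) (p * n + t) = of_int (int p * m)"
proof -
  define N where "N = p * n + t"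
  have odd: "odd p"
    using assms(1,2) by (intro prime_odd_nat) simp_all
  have p: "p - 2 + 2 = p"
    using assms(2) by simp
  have "int_multiple p ((qpoch (fps_X ^ (2 * p)) N * inverse (qpoch (fps_X ^ p) N ^ 3) * quint_series) $ N)"
    using series_in_X_power_quotient[of p] assms(2) dvd_24_mult_plus_1_shift[OF assms(5)]
    unfolding N_def by (intro series_in_X_power_mult_quint_series_nth_multiple assms(1)) simp_all
  moreover have "d (p - 2) N = (f_trunc N 2 ^ p * inverse (f_trunc N 1 ^ (3 * p)) * quint_series) $ N"
    by (rule d_eq_quint_series_nth[of "p - 2" N, unfolded p])
  ultimately have "int_multiple p (d (p - 2) N)"
    using frobenius_nth_cong[OF assms(1) odd, of N N] int_multiple_add by fastforce
  then show ?thesis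
    unfolding int_multiple_def N_def .
qed

end
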